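(* Let $(u,K)$ be a Griffith almost-minimizer in $\Omega$ with gauge $h$. There exists a universal constant $\varepsilon_{\rm van}>0$ such that for all $x_0\in K$ and $r_0>0$ with $B(x_0,r_0)\subset\Omega$, the condition $$\beta_K(x,r)+\eta_K(x,r)\le\varepsilon_{\rm van}\quad\text{for all }x\in K\cap B(x_0,r_0/2)\text{ and }0<r\le r_0/2$$ implies $m_K(x,r)=\eta_K(x,r)=0$ for all $x\in K\cap B(x_0,r_0/20)$ and $0<r\le r_0/20$ (with $m_K(x,r)$ computed with respect to any minimal separating extension of $K$ in $B(x,r)$).
   Context: Let $\Omega\subset\mathbb{R}^2$ be open and fix a linear map $\mathbb{C}:\mathbb{R}^{2\times2}\to\mathbb{R}^{2\times2}_{\rm sym}$ with $\mathbb{C}(\xi-\xi^T)=0$ and $\mathbb{C}\xi:\xi\ge c_0|\xi+\xi^T|^2$ for all $\xi$, some $c_0>0$. $e(u)=(\nabla u+\nabla u^T)/2$; $B(x,r)$ open ball. Admissible pair: $K\subset\Omega$ relatively closed, $u\in W^{1,2}_{\rm loc}(\Omega\setminus K;\mathbb{R}^2)$. For $\overline{B(x,r)}\subset\Omega$, a competitor in $B(x,r)$ is an admissible $(v,L)$ with $L\setminus B(x,r)=K\setminus B(x,r)$, $v=u$ a.e. in $\Omega\setminus(K\cup B(x,r))$. Gauge: non-decreasing $h:(0,\infty)\to[0,\infty]$, $h(0^+)=0$. Coral: $\mathcal{H}^1(K\cap B(x,r))>0$ for $x\in K$, $r>0$. A Griffith almost-minimizer with gauge $h$ is an admissible coral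 pair of locally finite energy with $\int_{B(x,r)\setminus K}\mathbb{C}e(u):e(u)+\mathcal{H}^1(K\cap B(x,r))\le\int_{B(x,r)\setminus L}\mathbb{C}e(v):e(v)+\mathcal{H}^1(L\cap B(x,r))+h(r)r$ for all $\overline{B(x,r)}\subset\Omega$ and competitors $(v,L)$. Flatness: for $F\ni x_0$, $\beta_F(x_0,r_0)=r_0^{-1}\inf_\ell\sup_{y\in F\cap B(x_0,r_0)}\mathrm{dist}(y,\ell)$ over lines through $x_0$; $\nu(x_0,r_0)$ unit normal of a minimizing line, $D^\pm_t(x_0,r_0)=\{x\in B(x_0,r_0):\pm(x-x_0)\cdot\nu>t\}$. $F$ separates $B(x_0,r_0)$ if $\beta:=\beta_F(x_0,r_0)\le1/2$ and $D^\pm_{\beta r_0}$ lie in distinct connected components of $B(x_0,r_0)\setminus F$. Holes: for $x_0\in K$, $B(x_0,r_0)\subset\Omega$, $\beta_K(x_0,r_0)\le1/2$, a separating extension is a relatively closed coral $E\subset B(x_0,r_0)$ with $K\cap B(x_0,r_0)\subset E$, $\beta_E(x_0,r_0)=\beta_K(x_0,r_0)$, $E$ separating $B(x_0,r_0)$; $\eta_K(x_0,r_0)=r_0^{-1}\min\mathcal{H}^1(E\setminus K)$ over such $E$ (a minimizer is a minimal separating extension). Bad mass: $\tau=10^{-10}$, $M=10^6$. Given a minimal separating extension $E$ in $B(x_0,r_0)$: for $x\in K\cap B(x_0,9r_0/10)$, $t\in(0,r_0/10)$, $B(x,t)$ is good if $\beta_K(x,t)\le\tau$ and $t^{-1}\mathcal{H}^1((E\cap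 B(x,t))\setminus K)\le\tau$; $\sigma(x)=\inf\{r>0:B(x,t)\text{ good }\forall t\in[r,r_0/10]\}$; $R(x_0,r_0)=B(x_0,r_0)\cap\bigcup\{B(x,M\sigma(x)):x\in K\cap B(x_0,9r_0/10),\sigma(x)>0\}$; $m_K(x_0,r_0)=r_0^{-1}\mathcal{H}^1(K\cap R(x_0,r_0))$. *)

theory Defs
  imports "HOL-Analysis.Analysis"
begin

type_synonym pt = "real^2"
type_synonym mat = "real^2^2"

section \<open>One-dimensional Hausdorff measure (outer measure), normalised so that H1 = length\<close>

definition H1 :: "'a::metric_space set \<Rightarrow> ennreal" where
  "H1 A = (SUP \<delta>\<in>{0<..}.
      INF C\<in>{C :: nat \<Rightarrow> 'a set. A \<subseteq> (\<Union>n. C n) \<and> (\<forall>n. bounded (C n) \<and> diameter (C n) \<le> \<delta>)}.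
        (\<Sum>n. ennreal (diameter (C n))))"

definition elastic :: "(mat \<Rightarrow> mat) \<Rightarrow> bool" where
  "elastic C \<longleftrightarrow> linear C \<and> (\<forall>\<xi>. transpose (C \<xi>) = C \<xi>) \<and> (\<forall>\<xi>. C (\<xi> - transpose \<xi>) = 0)
     \<and> (\<exists>c0>0. \<forall>\<xi>. C \<xi> \<bullet> \<xi> \<ge> c0 * (norm (\<xi> + transpose \<xi>))\<^sup>2)"

section \<open>Local Sobolev space W^{1,2}_loc with weak gradients (G x $ i $ j = d_j u_i)\<close>

definition loc_L2 :: "pt set \<Rightarrow> (pt \<Rightarrow> 'b::euclidean_space) \<Rightarrow> bool" where
  "loc_L2 U f \<longleftrightarrow> set_borel_measurable lebesgue U f \<and>
     (\<forall>S. compact S \<and> S \<subseteq> U \<longrightarrow> set_integrable lebesgue S (\<lambda>x. (norm (f x))\<^sup>2))"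

definition test_fun :: "pt set \<Rightarrow> (pt \<Rightarrow> real) \<Rightarrow> (pt \<Rightarrow> pt) \<Rightarrow> bool" where
  "test_fun U \<phi> d\<phi> \<longleftrightarrow> (\<forall>x. (\<phi> has_derivative (\<lambda>h. d\<phi> x \<bullet> h)) (at x)) \<and> continuous_on UNIV d\<phi>
     \<and> compact (closure {x. \<phi> x \<noteq> 0}) \<and> closure {x. \<phi> x \<noteq> 0} \<subseteq> U"

definition W12loc_grad :: "pt set \<Rightarrow> (pt \<Rightarrow> pt) \<Rightarrow> (pt \<Rightarrow> mat) \<Rightarrow> bool" where
  "W12loc_grad U u G \<longleftrightarrow> loc_L2 U u \<and> loc_L2 U G \<and>
     (\<forall>\<phi> d\<phi> i j. test_fun U \<phi> d\<phi> \<longrightarrow>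
        (LINT x:U|lebesgue. u x $ i * d\<phi> x $ j) = - (LINT x:U|lebesgue. G x $ i $ j * \<phi> x))"

definition W12loc :: "pt set \<Rightarrow> (pt \<Rightarrow> pt) \<Rightarrow> bool" where
  "W12loc U u \<longleftrightarrow> (\<exists>G. W12loc_grad U u G)"

definition wgrad :: "pt set \<Rightarrow> (pt \<Rightarrow> pt) \<Rightarrow> pt \<Rightarrow> mat" where
  "wgrad U u = (SOME G. W12loc_grad U u G)"

definition symgrad :: "pt set \<Rightarrow> (pt \<Rightarrow> pt) \<Rightarrow> pt \<Rightarrow> mat" where
  "symgrad U u x = (1/2) *\<^sub>R (wgrad U u x + transpose (wgrad U u x))"

definition energy :: "(mat \<Rightarrow> mat) \<Rightarrow> pt set \<Rightarrow> (pt \<Rightarrow> pt) \<Rightarrow> pt set \<Rightarrow> pt set \<Rightarrow> ennreal" where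
  "energy C \<Omega> u K B =
     (\<integral>\<^sup>+ x. ennreal (C (symgrad (\<Omega> - K) u x) \<bullet> symgrad (\<Omega> - K) u x) * indicator (B - K) x \<partial>lebesgue)
     + H1 (K \<inter> B)"

definition admissible :: "pt set \<Rightarrow> (pt \<Rightarrow> pt) \<Rightarrow> pt set \<Rightarrow> bool" where
  "admissible \<Omega> u K \<longleftrightarrow> K \<subseteq> \<Omega> \<and> closedin (top_of_set \<Omega>) K \<and> W12loc (\<Omega> - K) u"

definition competitor :: "pt set \<Rightarrow> (pt \<Rightarrow> pt) \<Rightarrow> pt set \<Rightarrow> pt \<Rightarrow> real \<Rightarrow> (pt \<Rightarrow> pt) \<Rightarrow> pt set \<Rightarrow> bool" where
  "competitor \<Omega> u K x r v L \<longleftrightarrow> admissible \<Omega> v L \<and> L - ball x r = K - ball x r \<and>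
     (AE y in lebesgue. y \<in> \<Omega> - (K \<union> ball x r) \<longrightarrow> v y = u y)"

definition coral :: "'a::metric_space set \<Rightarrow> bool" where
  "coral K \<longleftrightarrow> (\<forall>x\<in>K. \<forall>r>0. H1 (K \<inter> ball x r) > 0)"

definition gauge_fn :: "(real \<Rightarrow> ennreal) \<Rightarrow> bool" where
  "gauge_fn h \<longleftrightarrow> mono_on {0<..} h \<and> (h \<longlongrightarrow> 0) (at_right 0)"

definition griffith_amin :: "(mat \<Rightarrow> mat) \<Rightarrow> pt set \<Rightarrow> (real \<Rightarrow> ennreal) \<Rightarrow> (pt \<Rightarrow> pt) \<Rightarrow> pt set \<Rightarrow> bool" where
  "griffith_amin C \<Omega> h u K \<longleftrightarrow> admissible \<Omega> u K \<and> coral K \<and>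
     (\<forall>x r. r > 0 \<and> cball x r \<subseteq> \<Omega> \<longrightarrow> energy C \<Omega> u K (ball x r) < \<infinity>) \<and>
     (\<forall>x r v L. r > 0 \<and> cball x r \<subseteq> \<Omega> \<and> competitor \<Omega> u K x r v L \<longrightarrow>
        energy C \<Omega> u K (ball x r) \<le> energy C \<Omega> v L (ball x r) + h r * ennreal r)"

definition flat_dev :: "pt set \<Rightarrow> pt \<Rightarrow> real \<Rightarrow> pt \<Rightarrow> real" where
  "flat_dev F x0 r0 \<nu> = Sup (insert 0 ((\<lambda>y. infdist y {x. (x - x0) \<bullet> \<nu> = 0}) ` (F \<inter> ball x0 r0)))"

definition beta :: "pt set \<Rightarrow> pt \<Rightarrow> real \<Rightarrow> real" where
  "beta F x0 r0 = (INF \<nu>\<in>sphere 0 1. flat_dev F x0 r0 \<nu>) / r0"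

definition min_normal :: "pt set \<Rightarrow> pt \<Rightarrow> real \<Rightarrow> pt \<Rightarrow> bool" where
  "min_normal F x0 r0 \<nu> \<longleftrightarrow> norm \<nu> = 1 \<and> flat_dev F x0 r0 \<nu> / r0 = beta F x0 r0"

definition Dplus :: "pt \<Rightarrow> real \<Rightarrow> pt \<Rightarrow> real \<Rightarrow> pt set" where
  "Dplus x0 r0 \<nu> t = {x \<in> ball x0 r0. (x - x0) \<bullet> \<nu> > t}"

definition Dminus :: "pt \<Rightarrow> real \<Rightarrow> pt \<Rightarrow> real \<Rightarrow> pt set" where
  "Dminus x0 r0 \<nu> t = {x \<in> ball x0 r0. - ((x - x0) \<bullet> \<nu>) > t}"

definition separates :: "pt set \<Rightarrow> pt \<Rightarrow> real \<Rightarrow> bool" where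
  "separates F x0 r0 \<longleftrightarrow> beta F x0 r0 \<le> 1/2 \<and>
     (\<exists>\<nu>. min_normal F x0 r0 \<nu> \<and>
        (\<exists>C1 C2. C1 \<in> components (ball x0 r0 - F) \<and> C2 \<in> components (ball x0 r0 - F) \<and> C1 \<noteq> C2 \<and>
           Dplus x0 r0 \<nu> (beta F x0 r0 * r0) \<subseteq> C1 \<and> Dminus x0 r0 \<nu> (beta F x0 r0 * r0) \<subseteq> C2))"

definition sep_ext :: "pt set \<Rightarrow> pt \<Rightarrow> real \<Rightarrow> pt set \<Rightarrow> bool" where
  "sep_ext K x0 r0 E \<longleftrightarrow> E \<subseteq> ball x0 r0 \<and> closedin (top_of_set (ball x0 r0)) E \<and> coral E \<and>
     K \<inter> ball x0 r0 \<subseteq> E \<and> beta E x0 r0 = beta K x0 r0 \<and> separates E x0 r0"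

definition eta :: "pt set \<Rightarrow> pt \<Rightarrow> real \<Rightarrow> ennreal" where
  "eta K x0 r0 = (INF E\<in>{E. sep_ext K x0 r0 E}. H1 (E - K)) / ennreal r0"

definition min_sep_ext :: "pt set \<Rightarrow> pt \<Rightarrow> real \<Rightarrow> pt set \<Rightarrow> bool" where
  "min_sep_ext K x0 r0 E \<longleftrightarrow> sep_ext K x0 r0 E \<and>
     H1 (E - K) = (INF E'\<in>{E'. sep_ext K x0 r0 E'}. H1 (E' - K))"

definition tau :: real where "tau = 10 powr (-10)"
definition Mbig :: real where "Mbig = 10^6"

definition good_ball :: "pt set \<Rightarrow> pt set \<Rightarrow> pt \<Rightarrow> real \<Rightarrow> bool" where
  "good_ball K E x t \<longleftrightarrow> beta K x t \<le> tau \<and> H1 ((E \<inter> ball x t) - K) / ennreal t \<le> ennreal tau"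

definition sigma :: "pt set \<Rightarrow> pt set \<Rightarrow> real \<Rightarrow> pt \<Rightarrow> real" where
  "sigma K E r0 x = Inf {r. r > 0 \<and> (\<forall>t\<in>{r..r0/10}. good_ball K E x t)}"

definition badR :: "pt set \<Rightarrow> pt set \<Rightarrow> pt \<Rightarrow> real \<Rightarrow> pt set" where
  "badR K E x0 r0 = ball x0 r0 \<inter>
     \<Union>{ball x (Mbig * sigma K E r0 x) | x. x \<in> K \<inter> ball x0 (9/10 * r0) \<and> sigma K E r0 x > 0}"

definition mK :: "pt set \<Rightarrow> pt set \<Rightarrow> pt \<Rightarrow> real \<Rightarrow> ennreal" where
  "mK K E x0 r0 = H1 (K \<inter> badR K E x0 r0) / ennreal r0"

end

theory Submission
  imports Defs
begin

text \<open>Smallness of \<open>\<beta> + \<eta>\<close> at all scales makes \<open>K\<close> itself separate every small ball, so that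
  \<open>K \<inter> B(x,r)\<close> is its own minimal separating extension. At one scale \<open>s\<close>, a separating extension
  adding length \<open>< 2\<epsilon>s\<close> forces \<open>K\<close> to be \<open>5\<epsilon>s\<close>-dense along the approximating line, since
  otherwise the extension would have to fill a whole window of that line. Hence any two nearby
  points of \<open>K\<close> have a point of \<open>K\<close> near their midpoint, and iterated midpoint refinement produces
  chains in \<open>K\<close> with arbitrarily small steps across \<open>B(x,8r)\<close>. By Fashoda's theorem every path
  joining the two half-discs \<open>D\<^sup>\<plusminus>\<close> of \<open>B(x,r)\<close> crosses the polygons of these chains, hence meets
  the closed set \<open>K\<close>. Then \<open>\<eta> = 0\<close>, a minimal extension adds no length, all balls are good and the
  bad region is empty.\<close>

definition perp :: "pt \<Rightarrow> pt" where
  "perp v = (\<chi> i. if i = 1 then v$2 else - v$1)"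

lemma inner_pt: "(a::pt) \<bullet> b = a$1 * b$1 + a$2 * b$2"
  by (simp add: inner_vec_def sum_2)

lemma perp_nth [simp]: "perp v $ 1 = v$2" "perp v $ 2 = - v$1"
  by (simp_all add: perp_def)

lemma inner_perp_perp [simp]: "perp v \<bullet> perp w = v \<bullet> w"
  by (simp add: inner_pt algebra_simps)

lemma inner_perp_self [simp]: "perp v \<bullet> v = 0" "v \<bullet> perp v = 0"
  by (simp_all add: inner_pt)

lemma norm_perp [simp]: "norm (perp v) = norm v"
  by (simp add: norm_eq_sqrt_inner)

lemma unit_decomp:
  assumes "norm v = 1"
  shows "w = (w \<bullet> perp v) *\<^sub>R perp v + (w \<bullet> v) *\<^sub>R v"
proof -
  have v: "v$1 * v$1 + v$2 * v$2 = 1"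
    using assms by (metis inner_pt norm_eq_1)
  have "w$1 = (w$1 * v$2 - w$2 * v$1) * v$2 + (w$1 * v$1 + w$2 * v$2) * v$1"
       "w$2 = (w$1 * v$2 - w$2 * v$1) * (- v$1) + (w$1 * v$1 + w$2 * v$2) * v$2"
    using v by algebra+
  then show ?thesis
    unfolding vec_eq_iff forall_2 by (simp add: inner_pt)
qed

lemma inner_perp_comb:
  assumes "norm v = 1"
  shows "(a *\<^sub>R perp v + b *\<^sub>R v) \<bullet> perp v = a" "(a *\<^sub>R perp v + b *\<^sub>R v) \<bullet> v = b"
  using assms by (simp_all add: inner_add_left norm_eq_1)

lemma norm_perp_comb_sq:
  assumes "norm v = 1"
  shows "(norm (a *\<^sub>R perp v + b *\<^sub>R v))\<^sup>2 = a\<^sup>2 + b\<^sup>2"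
proof -
  have "perp v \<bullet> perp v = 1" "v \<bullet> v = 1"
    using assms by (simp_all add: norm_eq_1)
  then show ?thesis
    unfolding power2_norm_eq_inner by (simp add: inner_add_left inner_add_right power2_eq_square)
qed

lemma norm_perp_comb_le:
  assumes "norm v = 1"
  shows "norm (a *\<^sub>R perp v + b *\<^sub>R v) \<le> \<bar>a\<bar> + \<bar>b\<bar>"
  using norm_triangle_ineq[of "a *\<^sub>R perp v" "b *\<^sub>R v"] assms by simp

lemma abs_inner_le_dist: "norm (e::'a::real_inner) = 1 \<Longrightarrow> \<bar>(a - b) \<bullet> e\<bar> \<le> dist a b"
  using Cauchy_Schwarz_ineq2[of "a - b" e] by (simp add: dist_norm)

lemma convex_coord_preimage:
  fixes x e :: "'a::real_inner"
  assumes "convex S"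
  shows "convex {z. (z - x) \<bullet> e \<in> S}"
proof -
  have "{z. (z - x) \<bullet> e \<in> S} = (+) x ` ((\<lambda>w. w \<bullet> e) -` S)"
  proof (intro set_eqI iffI)
    fix z assume "z \<in> {z. (z - x) \<bullet> e \<in> S}"
    then show "z \<in> (+) x ` ((\<lambda>w. w \<bullet> e) -` S)"
      by (intro image_eqI[of _ _ "z - x"]) auto
  qed auto
  moreover have "convex ((\<lambda>w. w \<bullet> e) -` S)"
    by (rule convex_linear_vimage[OF bounded_linear_inner_left[THEN bounded_linear.linear] assms])
  ultimately show ?thesis
    by (simp add: convex_translation)
qed

lemma H1_mono: assumes "A \<subseteq> B" shows "H1 A \<le> H1 B"
  unfolding H1_def
  by (intro SUP_mono bexI INF_superset_mono) (use assms in auto)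

lemma H1_empty [simp]: "H1 {} = 0"
proof -
  have "(INF C\<in>{C :: nat \<Rightarrow> 'a set. {} \<subseteq> (\<Union>n. C n) \<and> (\<forall>k. bounded (C k) \<and> diameter (C k) \<le> d)}.
        (\<Sum>n. ennreal (diameter (C n)))) \<le> (\<Sum>n. ennreal (diameter ((\<lambda>_. {}) n :: 'a set)))"
    if "d > 0" for d :: real
    by (rule INF_lower) (use that in auto)
  then show ?thesis unfolding H1_def by (simp add: le_zero_eq)
qed

lemma half_projection_le_cover_sum:
  fixes A :: "pt set" and C :: "nat \<Rightarrow> pt set"
  assumes e: "norm e = 1" and sub: "{a..b} \<subseteq> (\<lambda>w. (w - y) \<bullet> e) ` A"
    and cover: "A \<subseteq> (\<Union>n. C n)" "\<And>n. bounded (C n)"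
  shows "ennreal ((b - a) / 2) \<le> (\<Sum>n. ennreal (diameter (C n)))"
proof -
  let ?p = "\<lambda>w. (w - y) \<bullet> e"
  define c where "c n = (SOME c. c \<in> C n)" for n
  define I where "I n = {?p (c n) - diameter (C n) .. ?p (c n) + diameter (C n)}" for n
  have "{a..b} \<subseteq> (\<Union>n. I n)"
  proof
    fix t assume "t \<in> {a..b}"
    then obtain w n where w: "w \<in> C n" "t = ?p w" using sub cover(1) by blast
    then have cn: "c n \<in> C n" unfolding c_def by (metis someI_ex)
    have "\<bar>?p w - ?p (c n)\<bar> \<le> dist w (c n)"
      using abs_inner_le_dist[OF e, of w "c n"] by (simp add: inner_diff_left)
    also have "\<dots> \<le> diameter (C n)" by (rule diameter_bounded_bound[OF cover(2) w(1) cn])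
    finally have "\<bar>?p w - ?p (c n)\<bar> \<le> diameter (C n)" .
    then have "t \<in> I n" unfolding I_def using w by (auto simp: abs_le_iff)
    then show "t \<in> (\<Union>n. I n)" by blast
  qed
  then have "emeasure lborel {a..b} \<le> emeasure lborel (\<Union>n. I n)"
    by (rule emeasure_mono) (simp add: I_def)
  then have "ennreal (b - a) \<le> emeasure lborel (\<Union>n. I n)"
    by (simp add: emeasure_lborel_Icc_eq ennreal_neg split: if_splits)
  also have "\<dots> \<le> (\<Sum>n. emeasure lborel (I n))"
    by (rule emeasure_subadditive_countably) (auto simp: I_def)
  also have "\<dots> = (\<Sum>n. 2 * ennreal (diameter (C n)))"
  proof -
    have "emeasure lborel (I n) = 2 * ennreal (diameter (C n))" for n
      using diameter_ge_0[of "C n"] cover(2) unfolding I_def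
      by (simp add: emeasure_lborel_Icc_eq ennreal_mult)
    then show ?thesis by simp
  qed
  finally have "ennreal (b - a) \<le> 2 * (\<Sum>n. ennreal (diameter (C n)))" by simp
  moreover have "ennreal (b - a) = 2 * ennreal ((b - a) / 2)"
  proof (cases "a \<le> b")
    case True
    have "(2::real) * ((b - a) / 2) = b - a" by simp
    moreover have "ennreal (2 * ((b - a) / 2)) = ennreal 2 * ennreal ((b - a) / 2)"
      by (rule ennreal_mult) (use True in auto)
    ultimately show ?thesis by (metis ennreal_numeral)
  qed (simp add: ennreal_neg)
  ultimately show ?thesis by (simp add: ennreal_mult_le_mult_iff)
qed

lemma H1_ge_half_projection:
  fixes A :: "pt set"
  assumes "norm e = 1" and "{a..b} \<subseteq> (\<lambda>w. (w - y) \<bullet> e) ` A"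
  shows "ennreal ((b - a) / 2) \<le> H1 A"
proof -
  have "ennreal ((b - a) / 2) \<le> (INF C\<in>{C :: nat \<Rightarrow> pt set. A \<subseteq> (\<Union>n. C n) \<and> (\<forall>k. bounded (C k) \<and> diameter (C k) \<le> 1)}.
        (\<Sum>n. ennreal (diameter (C n))))"
    using half_projection_le_cover_sum[OF assms] by (auto intro: INF_greatest)
  also have "\<dots> \<le> H1 A" unfolding H1_def by (rule SUP_upper) auto
  finally show ?thesis .
qed

lemma abs_inner_le_infdist_line:
  assumes "norm \<nu> = 1"
  shows "\<bar>(z - y) \<bullet> \<nu>\<bar> \<le> infdist z {w. (w - y) \<bullet> \<nu> = 0}"
proof -
  have ne: "{w. (w - y) \<bullet> \<nu> = 0} \<noteq> {}" by (auto intro: exI[of _ y])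
  have "\<bar>(z - y) \<bullet> \<nu>\<bar> \<le> dist z w" if "(w - y) \<bullet> \<nu> = 0" for w
    using abs_inner_le_dist[OF assms, of z w] that by (simp add: inner_diff_left)
  then show ?thesis unfolding infdist_notempty[OF ne] by (intro cINF_greatest[OF ne]) auto
qed

lemma flat_dev_bdd_above:
  "bdd_above (insert 0 ((\<lambda>z. infdist z {w. (w - y) \<bullet> \<nu> = 0}) ` (F \<inter> ball y s)))"
proof (rule bdd_aboveI)
  fix a assume "a \<in> insert 0 ((\<lambda>z. infdist z {w. (w - y) \<bullet> \<nu> = 0}) ` (F \<inter> ball y s))"
  then consider "a = 0" | z where "z \<in> ball y s" "a = infdist z {w. (w - y) \<bullet> \<nu> = 0}" by blast
  then show "a \<le> max 0 s"
  proof cases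
    case 2
    then have "a \<le> dist z y" by (simp add: infdist_le)
    then show ?thesis using 2 by (simp add: dist_commute)
  qed simp
qed

lemma flat_dev_nonneg: "0 \<le> flat_dev F y s \<nu>"
  unfolding flat_dev_def by (rule cSup_upper[OF _ flat_dev_bdd_above]) simp

lemma infdist_le_flat_dev:
  "z \<in> F \<inter> ball y s \<Longrightarrow> infdist z {w. (w - y) \<bullet> \<nu> = 0} \<le> flat_dev F y s \<nu>"
  unfolding flat_dev_def by (rule cSup_upper[OF _ flat_dev_bdd_above]) simp

lemma abs_inner_le_flat_dev:
  "norm \<nu> = 1 \<Longrightarrow> z \<in> F \<inter> ball y s \<Longrightarrow> \<bar>(z - y) \<bullet> \<nu>\<bar> \<le> flat_dev F y s \<nu>"
  using abs_inner_le_infdist_line infdist_le_flat_dev order_trans by blast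

lemma flat_dev_mono: "F \<inter> ball y s \<subseteq> G \<inter> ball y s \<Longrightarrow> flat_dev F y s \<nu> \<le> flat_dev G y s \<nu>"
  unfolding flat_dev_def by (rule cSup_subset_mono[OF _ flat_dev_bdd_above]) auto

lemma flat_dev_Int_ball [simp]: "flat_dev (F \<inter> ball y s) y s = flat_dev F y s"
  unfolding flat_dev_def by (simp add: Int_assoc)

lemma beta_Int_ball [simp]: "beta (F \<inter> ball y s) y s = beta F y s"
  unfolding beta_def by simp

lemma min_normal_Int_ball [simp]: "min_normal (F \<inter> ball y s) y s = min_normal F y s"
  unfolding min_normal_def by simp

lemma beta_le_flat_dev:
  assumes "s > 0" "norm \<nu> = 1"
  shows "beta F y s \<le> flat_dev F y s \<nu> / s"
proof -
  have "(INF \<nu>\<in>sphere 0 1. flat_dev F y s \<nu>) \<le> flat_dev F y s \<nu>"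
    by (rule cINF_lower) (use flat_dev_nonneg assms in \<open>auto intro!: bdd_belowI2[where m=0]\<close>)
  then show ?thesis unfolding beta_def using assms by (simp add: divide_right_mono)
qed

lemma norm_perp_comb_less:
  assumes "norm \<nu> = 1" "\<bar>a\<bar> \<le> s/2" "\<bar>b\<bar> \<le> s/2" "s > 0"
  shows "norm (a *\<^sub>R perp \<nu> + b *\<^sub>R \<nu>) < s"
proof -
  have "\<bar>a\<bar>\<^sup>2 \<le> (s/2)\<^sup>2" "\<bar>b\<bar>\<^sup>2 \<le> (s/2)\<^sup>2"
    by (rule power_mono; use assms in auto)+
  then have "(norm (a *\<^sub>R perp \<nu> + b *\<^sub>R \<nu>))\<^sup>2 \<le> (s/2)\<^sup>2 + (s/2)\<^sup>2"
    unfolding norm_perp_comb_sq[OF assms(1)] by simp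
  also have "\<dots> < s\<^sup>2" using assms(4) by (simp add: power2_eq_square field_simps)
  finally show ?thesis using assms(4) by (meson power2_less_imp_less less_imp_le)
qed

lemma separating_set_meets_chord:
  assumes nu: "norm \<nu> = 1"
    and C: "C1 \<in> components (ball y s - E)" "C2 \<in> components (ball y s - E)" "C1 \<noteq> C2"
    and D: "Dplus y s \<nu> (\<beta> * s) \<subseteq> C1" "Dminus y s \<nu> (\<beta> * s) \<subseteq> C2"
    and \<beta>: "\<beta> < 1/2" and t: "\<bar>t\<bar> \<le> s/2" and s: "s > 0"
  shows "\<exists>h. \<bar>h\<bar> \<le> s/2 \<and> y + t *\<^sub>R perp \<nu> + h *\<^sub>R \<nu> \<in> E"
proof (rule ccontr)
  assume no: "\<not> ?thesis"
  define f where "f h = y + t *\<^sub>R perp \<nu> + h *\<^sub>R \<nu>" for h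
  have conS: "connected (f ` {-s/2..s/2})"
    unfolding f_def by (intro connected_continuous_image continuous_intros connected_Icc)
  have "dist (f h) y < s" if "\<bar>h\<bar> \<le> s/2" for h
    using norm_perp_comb_less[OF nu t that s] by (simp add: f_def dist_norm)
  then have inball: "f h \<in> ball y s" if "\<bar>h\<bar> \<le> s/2" for h
    using that by (simp add: dist_commute)
  then have SS: "f ` {-s/2..s/2} \<subseteq> ball y s - E"
    using no by (auto simp: f_def abs_le_iff)
  have "(f h - y) \<bullet> \<nu> = h" for h
    using inner_perp_comb[OF nu, of t h] by (simp add: f_def algebra_simps)
  moreover have "\<beta> * s < s/2" using mult_strict_right_mono[OF \<beta> s] by simp
  ultimately have "f (s/2) \<in> Dplus y s \<nu> (\<beta> * s)" "f (-s/2) \<in> Dminus y s \<nu> (\<beta> * s)"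
    using inball s unfolding Dplus_def Dminus_def by auto
  moreover have "f ` {-s/2..s/2} \<subseteq> C1"
    using components_maximal[OF C(1) conS SS] calculation D s by force
  ultimately have "f (-s/2) \<in> C1 \<inter> C2" using D s by auto
  then show False using components_eq[OF C(1) C(2)] C(3) by blast
qed

section \<open>Density of \<open>K\<close> from small holes\<close>

lemma abs_inner_le_beta:
  assumes "min_normal F y s \<nu>" "s > 0" "z \<in> F \<inter> ball y s"
  shows "\<bar>(z - y) \<bullet> \<nu>\<bar> \<le> beta F y s * s"
  using abs_inner_le_flat_dev[of \<nu> z F y s] assms unfolding min_normal_def by (simp add: field_simps)

lemma abs_inner_le_if_beta_le:
  assumes "min_normal F y s \<nu>" "s > 0" "beta F y s \<le> \<epsilon>" "z \<in> F \<inter> ball y s"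
  shows "\<bar>(z - y) \<bullet> \<nu>\<bar> \<le> \<epsilon> * s"
  using order_trans[OF abs_inner_le_beta[OF assms(1,2,4)] mult_right_mono[OF assms(3)]] assms(2) by simp

lemma beta_le_if_beta_eta_le:
  assumes "ennreal (beta K y s) + eta K y s \<le> ennreal \<epsilon>" "0 \<le> \<epsilon>"
  shows "beta K y s \<le> \<epsilon>"
proof -
  have "ennreal (beta K y s) \<le> ennreal \<epsilon>" by (rule order_trans[OF _ assms(1)]) simp
  then show ?thesis using assms(2) by simp
qed

lemma exists_cheap_sep_ext:
  assumes "eta K y s \<le> ennreal \<epsilon>" "0 < s" "0 < \<epsilon>"
  obtains E where "sep_ext K y s E" "H1 (E - K) < ennreal (2 * \<epsilon> * s)"
proof -
  define I where "I = (INF E\<in>{E. sep_ext K y s E}. H1 (E - K))"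
  have "I = eta K y s * ennreal s" using assms(2) unfolding eta_def I_def by (simp add: ennreal_divide_times)
  also have "\<dots> \<le> ennreal \<epsilon> * ennreal s" using assms(1) by (rule mult_right_mono) simp
  also have "\<dots> = ennreal (\<epsilon> * s)" using assms(2,3) by (simp add: ennreal_mult)
  also have "\<dots> < ennreal (2 * \<epsilon> * s)" using assms(2,3) by (subst ennreal_less_iff) auto
  finally show ?thesis using that unfolding I_def INF_less_iff by blast
qed

lemma min_normal_if_sep_ext:
  assumes "sep_ext K y s E" "min_normal E y s \<nu>" "s > 0"
  shows "min_normal K y s \<nu>"
proof -
  have \<nu>: "norm \<nu> = 1" and beta_E: "beta E y s = beta K y s" and fd_E: "flat_dev E y s \<nu> / s = beta E y s"
    using assms(1,2) unfolding sep_ext_def min_normal_def by auto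
  have "flat_dev K y s \<nu> \<le> flat_dev E y s \<nu>"
    by (rule flat_dev_mono) (use assms(1) in \<open>auto simp: sep_ext_def\<close>)
  then have "flat_dev K y s \<nu> / s \<le> beta K y s"
    using divide_right_mono[of _ _ s] fd_E beta_E assms(3) by fastforce
  moreover have "beta K y s \<le> flat_dev K y s \<nu> / s" by (rule beta_le_flat_dev[OF assms(3) \<nu>])
  ultimately show ?thesis using \<nu> unfolding min_normal_def by simp
qed

text \<open>If \<open>K\<close> missed a ball of radius \<open>5\<epsilon>s\<close> around a point of the line, every chord of the
  extension \<open>E\<close> through the first \<open>4\<epsilon>s\<close> of that window would meet \<open>E - K\<close>, forcing
  \<open>H\<^sup>1(E - K) \<ge> 2\<epsilon>s\<close> by projection.\<close>
lemma dense_along_line_if_cheap_sep_ext: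
  assumes E: "sep_ext K y s E" "H1 (E - K) < ennreal (2 * \<epsilon> * s)"
    and mn: "min_normal E y s \<nu>"
    and C: "C1 \<in> components (ball y s - E)" "C2 \<in> components (ball y s - E)" "C1 \<noteq> C2"
    and D: "Dplus y s \<nu> (beta E y s * s) \<subseteq> C1" "Dminus y s \<nu> (beta E y s * s) \<subseteq> C2"
    and s: "0 < s" and eps: "beta K y s \<le> \<epsilon>" "\<epsilon> \<le> 1/100"
    and t0: "\<bar>t0\<bar> \<le> s/4"
  shows "\<exists>z\<in>K. dist z (y + t0 *\<^sub>R perp \<nu>) \<le> 5 * \<epsilon> * s"
proof (rule ccontr)
  assume no: "\<not> ?thesis"
  have \<nu>: "norm \<nu> = 1" using mn unfolding min_normal_def by simp
  have mnK: "min_normal K y s \<nu>" by (rule min_normal_if_sep_ext[OF E(1) mn s])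
  have beta_E: "beta E y s = beta K y s" using E(1) unfolding sep_ext_def by simp
  have "{t0 .. t0 + 4 * \<epsilon> * s} \<subseteq> (\<lambda>w. (w - y) \<bullet> perp \<nu>) ` (E - K)"
  proof
    fix t assume t: "t \<in> {t0 .. t0 + 4 * \<epsilon> * s}"
    have "\<epsilon> * s \<le> s / 100" using eps s by (simp add: mult_right_mono order.trans[OF _ eps(1)])
    then have ts: "\<bar>t\<bar> \<le> s/2" using t t0 by (auto simp: abs_le_iff)
    obtain h where h: "\<bar>h\<bar> \<le> s/2" "y + t *\<^sub>R perp \<nu> + h *\<^sub>R \<nu> \<in> E"
      using separating_set_meets_chord[OF \<nu> C D _ ts s] beta_E eps by auto
    define w where "w = y + t *\<^sub>R perp \<nu> + h *\<^sub>R \<nu>"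
    have wy: "w - y = t *\<^sub>R perp \<nu> + h *\<^sub>R \<nu>" unfolding w_def by simp
    have "w \<notin> K"
    proof
      assume wK: "w \<in> K"
      have "w \<in> ball y s"
        using norm_perp_comb_less[OF \<nu> ts h(1) s] wy by (simp add: dist_norm norm_minus_commute)
      then have "\<bar>h\<bar> \<le> \<epsilon> * s"
        using abs_inner_le_beta[OF mnK s, of w] wK eps s inner_perp_comb[OF \<nu>]
        by (simp add: wy) (meson mult_right_mono order_trans less_imp_le)
      moreover have "dist w (y + t0 *\<^sub>R perp \<nu>) \<le> \<bar>t - t0\<bar> + \<bar>h\<bar>"
        using norm_perp_comb_le[OF \<nu>, of "t - t0" h] by (simp add: w_def dist_norm algebra_simps)
      ultimately have "dist w (y + t0 *\<^sub>R perp \<nu>) \<le> 5 * \<epsilon> * s" using t by auto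
      then show False using no wK by blast
    qed
    moreover have "(w - y) \<bullet> perp \<nu> = t" using wy inner_perp_comb[OF \<nu>] by simp
    ultimately show "t \<in> (\<lambda>w. (w - y) \<bullet> perp \<nu>) ` (E - K)" using h(2) w_def by force
  qed
  from H1_ge_half_projection[OF _ this] have "ennreal (2 * \<epsilon> * s) \<le> H1 (E - K)"
    using \<nu> by (simp add: mult.assoc)
  then show False using E(2) by simp
qed

lemma flat_dense_if_small_beta_eta:
  assumes hyp: "ennreal (beta K y s) + eta K y s \<le> ennreal \<epsilon>"
    and s: "0 < s" and eps: "0 < \<epsilon>" "\<epsilon> \<le> 1/100"
  obtains \<nu> where "min_normal K y s \<nu>"
    "\<And>t. \<bar>t\<bar> \<le> s/4 \<Longrightarrow> \<exists>z\<in>K. dist z (y + t *\<^sub>R perp \<nu>) \<le> 5 * \<epsilon> * s"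
proof -
  have "eta K y s \<le> ennreal \<epsilon>" by (rule order_trans[OF _ hyp]) simp
  then obtain E where E: "sep_ext K y s E" "H1 (E - K) < ennreal (2 * \<epsilon> * s)"
    using exists_cheap_sep_ext s eps(1) by blast
  then obtain \<nu> C1 C2 where mn: "min_normal E y s \<nu>"
    and C: "C1 \<in> components (ball y s - E)" "C2 \<in> components (ball y s - E)" "C1 \<noteq> C2"
    and D: "Dplus y s \<nu> (beta E y s * s) \<subseteq> C1" "Dminus y s \<nu> (beta E y s * s) \<subseteq> C2"
    unfolding sep_ext_def separates_def by blast
  have "beta K y s \<le> \<epsilon>" using beta_le_if_beta_eta_le[OF hyp] eps by simp
  then show ?thesis
    using that[OF min_normal_if_sep_ext[OF E(1) mn s]]
      dense_along_line_if_cheap_sep_ext[OF E mn C D s _ eps(2)] by blast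
qed

lemma exists_near_midpoint:
  assumes hyp: "ennreal (beta K p (2 * dist p q)) + eta K p (2 * dist p q) \<le> ennreal \<epsilon>"
    and K: "p \<in> K" "q \<in> K" "p \<noteq> q" and eps: "0 < \<epsilon>" "\<epsilon> \<le> 1/100"
  shows "\<exists>z\<in>K. dist z (midpoint p q) \<le> 11 * \<epsilon> * dist p q"
proof -
  define l where "l = dist p q"
  have l: "l > 0" using K(3) l_def by simp
  obtain \<nu> where mn: "min_normal K p (2*l) \<nu>"
    and dense: "\<And>t. \<bar>t\<bar> \<le> (2*l)/4 \<Longrightarrow> \<exists>z\<in>K. dist z (p + t *\<^sub>R perp \<nu>) \<le> 5 * \<epsilon> * (2*l)"
    using flat_dense_if_small_beta_eta[OF hyp[folded l_def]] l eps by auto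
  have \<nu>: "norm \<nu> = 1" using mn unfolding min_normal_def by simp
  have "beta K p (2*l) \<le> \<epsilon>" using beta_le_if_beta_eta_le[OF hyp[folded l_def]] eps by simp
  then have "\<bar>(q - p) \<bullet> \<nu>\<bar> \<le> \<epsilon> * (2*l)"
    by (rule abs_inner_le_if_beta_le[OF mn, rotated]) (use K l l_def in auto)
  then have hq: "\<bar>(q - p) \<bullet> \<nu>\<bar> \<le> 2 * \<epsilon> * l" by simp
  define m where "m = midpoint p q"
  have mp: "m - p = (1/2) *\<^sub>R (q - p)"
    unfolding m_def midpoint_def by (simp add: vec_eq_iff field_simps)
  define t where "t = (m - p) \<bullet> perp \<nu>"
  have "\<bar>t\<bar> \<le> dist m p" unfolding t_def using abs_inner_le_dist[of "perp \<nu>" m p] \<nu> by simp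
  also have "\<dots> = l/2" using mp l_def by (simp add: dist_norm norm_minus_commute)
  finally obtain z where z: "z \<in> K" "dist z (p + t *\<^sub>R perp \<nu>) \<le> 10 * \<epsilon> * l"
    using dense[of t] by auto
  have "m - (p + t *\<^sub>R perp \<nu>) = ((m - p) \<bullet> \<nu>) *\<^sub>R \<nu>"
    using unit_decomp[OF \<nu>, of "m - p"] unfolding t_def by (simp add: algebra_simps)
  then have "dist m (p + t *\<^sub>R perp \<nu>) = \<bar>(m - p) \<bullet> \<nu>\<bar>"
    using \<nu> by (simp add: dist_norm)
  also have "\<dots> = \<bar>(q - p) \<bullet> \<nu>\<bar> / 2" by (simp add: mp)
  finally show ?thesis
    using z hq dist_triangle[of z m "p + t *\<^sub>R perp \<nu>"] unfolding m_def l_def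
    by (intro bexI[OF _ z(1)]) (simp add: dist_commute)
qed

section \<open>Chains by midpoint refinement\<close>

fun refine_chain :: "('a \<Rightarrow> 'a \<Rightarrow> 'a) \<Rightarrow> 'a list \<Rightarrow> 'a list" where
  "refine_chain m (p # q # rest) = p # m p q # refine_chain m (q # rest)"
| "refine_chain m l = l"

lemma refine_chain_Cons: "\<exists>t. refine_chain m (q # rest) = q # t"
  by (cases rest) auto

lemma refine_chain_hd_last:
  "l \<noteq> [] \<Longrightarrow> refine_chain m l \<noteq> [] \<and> hd (refine_chain m l) = hd l \<and> last (refine_chain m l) = last l"
proof (induction m l rule: refine_chain.induct)
  case (1 m p q rest)
  then show ?case using refine_chain_Cons[of m q rest] by auto
qed auto

lemma refine_chain_step:
  fixes m :: "'a::euclidean_space \<Rightarrow> 'a \<Rightarrow> 'a"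
  assumes mid: "\<And>p q. p \<in> K \<inter> cball x \<rho> \<Longrightarrow> q \<in> K \<inter> cball x \<rho> \<Longrightarrow> dist p q \<le> L \<Longrightarrow>
                   m p q \<in> K \<and> dist (m p q) (midpoint p q) \<le> c * dist p q"
    and c: "0 \<le> c" and L: "0 \<le> L"
  shows "set l \<subseteq> K \<inter> cball x \<rho> \<Longrightarrow> successively (\<lambda>p q. dist p q \<le> L) l \<Longrightarrow>
         set (refine_chain m l) \<subseteq> K \<inter> cball x (\<rho> + c * L) \<and>
         successively (\<lambda>p q. dist p q \<le> (1/2 + c) * L) (refine_chain m l)"
proof (induction l rule: induct_list012)
  case (3 p q rest)
  have pq: "p \<in> K \<inter> cball x \<rho>" "q \<in> K \<inter> cball x \<rho>" "dist p q \<le> L" using 3(3,4) by auto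
  have mK: "m p q \<in> K" and md: "dist (m p q) (midpoint p q) \<le> c * dist p q" using mid[OF pq] by auto
  have cL: "c * dist p q \<le> c * L" using c pq(3) by (rule mult_left_mono[rotated])
  have "midpoint p q \<in> cball x \<rho>"
    using closed_segment_subset[OF _ _ convex_cball] pq midpoint_in_closed_segment by blast
  then have "dist x (m p q) \<le> \<rho> + c * L"
    using md cL dist_triangle[of x "m p q" "midpoint p q"] by (simp add: dist_commute)
  moreover have "dist p (m p q) \<le> (1/2 + c) * L" "dist (m p q) q \<le> (1/2 + c) * L"
    using md cL pq(3) dist_triangle[of p "m p q" "midpoint p q"] dist_triangle[of "m p q" q "midpoint p q"]
    by (simp_all add: dist_midpoint dist_commute algebra_simps)
  moreover have "p \<in> K \<inter> cball x (\<rho> + c * L)" using pq mult_nonneg_nonneg[OF c L] by auto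
  moreover obtain t where "refine_chain m (q # rest) = q # t"
    using refine_chain_Cons[of m q rest] by blast
  ultimately show ?case using 3 mK by auto
qed (use mult_nonneg_nonneg[OF c L] in auto)

text \<open>At stage \<open>k\<close> the steps are \<open>L\<^sub>k = (1/2 + c)\<^sup>k L\<close> and the inserted points drift by at most
  \<open>c L\<^sub>k\<close>, so the total drift is \<open>c L / (1/2 - c) \<le> 3 c L\<close>.\<close>
lemma refine_chain_iterate:
  fixes m :: "'a::euclidean_space \<Rightarrow> 'a \<Rightarrow> 'a"
  assumes mid: "\<And>p q. p \<in> K \<inter> cball x R \<Longrightarrow> q \<in> K \<inter> cball x R \<Longrightarrow> dist p q \<le> L \<Longrightarrow>
                   m p q \<in> K \<and> dist (m p q) (midpoint p q) \<le> c * dist p q"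
    and R: "\<rho> + 3*c*L \<le> R" and c: "0 \<le> c" "c \<le> 1/6" and L: "0 \<le> L"
    and l: "set l \<subseteq> K \<inter> cball x \<rho>" "successively (\<lambda>p q. dist p q \<le> L) l"
  shows "set ((refine_chain m ^^ k) l) \<subseteq> K \<inter> cball x (\<rho> + 3*c*L*(1 - (1/2 + c)^k)) \<and>
         successively (\<lambda>p q. dist p q \<le> (1/2 + c)^k * L) ((refine_chain m ^^ k) l)"
proof (induction k)
  case 0
  then show ?case using l by simp
next
  case (Suc k)
  define \<theta> where "\<theta> = 1/2 + c"
  have \<theta>: "0 \<le> \<theta>^k" "\<theta>^k \<le> 1" "3 * \<theta> \<le> 2" using c unfolding \<theta>_def by (simp_all add: power_le_one)
  define \<rho>k where "\<rho>k = \<rho> + 3*c*L*(1 - \<theta>^k)"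
  have Lk: "0 \<le> \<theta>^k * L" "\<theta>^k * L \<le> L" using \<theta> L by (simp_all add: mult_left_le_one_le)
  have "3*c*L*(1 - \<theta>^k) \<le> 3*c*L" using \<theta> c L by (simp add: mult_left_le)
  then have "\<rho>k \<le> R" using R unfolding \<rho>k_def by linarith
  then have "cball x \<rho>k \<subseteq> cball x R" by (rule subset_cball)
  then have mid': "m p q \<in> K \<and> dist (m p q) (midpoint p q) \<le> c * dist p q"
    if "p \<in> K \<inter> cball x \<rho>k" "q \<in> K \<inter> cball x \<rho>k" "dist p q \<le> \<theta>^k * L" for p q
    using mid that Lk by (meson IntD1 IntD2 IntI order_trans subsetD)
  have step: "set (refine_chain m ((refine_chain m ^^ k) l)) \<subseteq> K \<inter> cball x (\<rho>k + c * (\<theta>^k * L)) \<and>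
      successively (\<lambda>p q. dist p q \<le> (1/2 + c) * (\<theta>^k * L)) (refine_chain m ((refine_chain m ^^ k) l))"
    by (rule refine_chain_step[OF mid' c(1) Lk(1)]) (use Suc.IH in \<open>simp_all add: \<rho>k_def \<theta>_def\<close>)
  have "c * L * \<theta>^k * (3 * \<theta> - 2) \<le> 0" using \<theta> c L by (simp add: mult_nonneg_nonpos)
  then have "\<rho>k + c * (\<theta>^k * L) \<le> \<rho> + 3*c*L*(1 - \<theta>^Suc k)"
    unfolding \<rho>k_def by (simp add: algebra_simps)
  then have "cball x (\<rho>k + c * (\<theta>^k * L)) \<subseteq> cball x (\<rho> + 3*c*L*(1 - \<theta>^Suc k))" by (rule subset_cball)
  then show ?case using step unfolding \<theta>_def by (auto simp: mult.assoc)
qed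

lemma fine_chain_exists:
  fixes K :: "'a::euclidean_space set"
  assumes mid: "\<And>p q. p \<in> K \<inter> cball x R \<Longrightarrow> q \<in> K \<inter> cball x R \<Longrightarrow> dist p q \<le> L \<Longrightarrow>
                   \<exists>z\<in>K. dist z (midpoint p q) \<le> c * dist p q"
    and c: "0 \<le> c" "c \<le> 1/6" and R: "\<rho> + 3*c*L \<le> R"
    and PQ: "P \<in> K \<inter> cball x \<rho>" "Q \<in> K \<inter> cball x \<rho>" "dist P Q \<le> L" and \<delta>: "\<delta> > 0"
  obtains l where "l \<noteq> []" "hd l = P" "last l = Q" "set l \<subseteq> K \<inter> cball x R"
    "successively (\<lambda>p q. dist p q \<le> \<delta>) l"
proof -
  define m where "m p q = (SOME z. z \<in> K \<and> dist z (midpoint p q) \<le> c * dist p q)" for p q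
  have m: "m p q \<in> K \<and> dist (m p q) (midpoint p q) \<le> c * dist p q"
    if "p \<in> K \<inter> cball x R" "q \<in> K \<inter> cball x R" "dist p q \<le> L" for p q
    unfolding m_def using someI_ex[OF mid[OF that, unfolded Bex_def]] .
  have L: "0 \<le> L" using PQ(3) zero_le_dist order_trans by blast
  define \<theta> where "\<theta> = 1/2 + c"
  have \<theta>: "0 \<le> \<theta>" "\<theta> < 1" using c unfolding \<theta>_def by auto
  obtain k where k: "\<theta>^k < \<delta> / (L + 1)" using real_arch_pow_inv[of "\<delta> / (L + 1)" \<theta>] \<delta> L \<theta> by auto
  have "\<theta>^k * L \<le> \<theta>^k * (L + 1)" using \<theta> by (intro mult_left_mono) auto
  also have "\<dots> < \<delta>" using k L by (simp add: field_simps)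
  finally have Lk: "\<theta>^k * L \<le> \<delta>" by simp
  define l where "l = (refine_chain m ^^ k) [P, Q]"
  have iter: "set l \<subseteq> K \<inter> cball x (\<rho> + 3*c*L*(1 - \<theta>^k))" "successively (\<lambda>p q. dist p q \<le> \<theta>^k * L) l"
    using refine_chain_iterate[OF m R c L, where l="[P, Q]" and k=k] PQ unfolding l_def \<theta>_def by auto
  have "3*c*L*(1 - \<theta>^k) \<le> 3*c*L" using \<theta> c L by (simp add: mult_left_le)
  then have "cball x (\<rho> + 3*c*L*(1 - \<theta>^k)) \<subseteq> cball x R" using R by (intro subset_cball) linarith
  then have "set l \<subseteq> K \<inter> cball x R" using iter(1) by blast
  moreover have "l \<noteq> [] \<and> hd l = P \<and> last l = Q"
    unfolding l_def by (induction k) (simp_all add: refine_chain_hd_last)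
  moreover have "successively (\<lambda>p q. dist p q \<le> \<delta>) l"
    by (rule successively_mono[OF iter(2)]) (use Lk in auto)
  ultimately show ?thesis using that by blast
qed

section \<open>Polygonal paths and crossings\<close>

fun polygon_path :: "'a::real_normed_vector list \<Rightarrow> real \<Rightarrow> 'a" where
  "polygon_path [] = linepath 0 0"
| "polygon_path [p] = linepath p p"
| "polygon_path (p # q # rest) = linepath p q +++ polygon_path (q # rest)"

lemma polygon_path_start_finish:
  "l \<noteq> [] \<Longrightarrow> pathstart (polygon_path l) = hd l \<and> pathfinish (polygon_path l) = last l"
  by (induction l rule: polygon_path.induct) auto

lemma path_polygon_path: "path (polygon_path l)"
proof (induction l rule: polygon_path.induct)
  case (3 p q rest)
  then show ?case by (auto intro!: path_join_imp simp: polygon_path_start_finish)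
qed (simp_all add: path_const)

lemma polygon_path_image_subset_convex:
  "l \<noteq> [] \<Longrightarrow> convex S \<Longrightarrow> set l \<subseteq> S \<Longrightarrow> path_image (polygon_path l) \<subseteq> S"
proof (induction l rule: polygon_path.induct)
  case (3 p q rest)
  then show ?case
    using path_image_join_subset[of "linepath p q" "polygon_path (q # rest)"] closed_segment_subset[of p S q]
    by auto
qed auto

lemma polygon_path_image_near_vertex:
  fixes l :: "'a::euclidean_space list"
  shows "l \<noteq> [] \<Longrightarrow> 0 \<le> L \<Longrightarrow> successively (\<lambda>p q. dist p q \<le> L) l \<Longrightarrow>
    z \<in> path_image (polygon_path l) \<Longrightarrow> \<exists>v\<in>set l. dist z v \<le> L"
proof (induction l rule: polygon_path.induct)
  case (3 p q rest)
  then consider "z \<in> closed_segment p q" | "z \<in> path_image (polygon_path (q # rest))"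
    using path_image_join_subset[of "linepath p q" "polygon_path (q # rest)"] by auto
  then show ?case
  proof cases
    case 1
    then show ?thesis using 3(4) dist_in_closed_segment[OF 1] by auto
  next
    case 2
    then show ?thesis using 3 by auto
  qed
qed auto

lemma paths_cross_in_rotated_box:
  fixes x \<nu> :: pt and a b :: real
  defines "Box \<equiv> {z. \<bar>(z - x) \<bullet> perp \<nu>\<bar> \<le> a \<and> \<bar>(z - x) \<bullet> \<nu>\<bar> \<le> b}"
  assumes \<nu>: "norm \<nu> = 1"
    and f: "path f" "(pathstart f - x) \<bullet> perp \<nu> = -a" "(pathfinish f - x) \<bullet> perp \<nu> = a"
      "path_image f \<subseteq> Box"
    and g: "path g" "(pathstart g - x) \<bullet> \<nu> = -b" "(pathfinish g - x) \<bullet> \<nu> = b" "path_image g \<subseteq> Box"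
  shows "path_image f \<inter> path_image g \<noteq> {}"
proof -
  define T :: "pt \<Rightarrow> pt" where "T z = (\<chi> i. if i = 1 then (z - x) \<bullet> perp \<nu> else (z - x) \<bullet> \<nu>)" for z
  have T_nth [simp]: "T z $ 1 = (z - x) \<bullet> perp \<nu>" "T z $ 2 = (z - x) \<bullet> \<nu>" for z
    by (simp_all add: T_def)
  have "continuous_on UNIV T"
    unfolding T_def
  proof (intro continuous_on_vec_lambda)
    fix i :: 2
    show "continuous_on UNIV (\<lambda>z. if i = 1 then (z - x) \<bullet> perp \<nu> else (z - x) \<bullet> \<nu>)"
      by (cases "i = 1") (simp_all add: continuous_intros)
  qed
  then have paths: "path (T \<circ> f)" "path (T \<circ> g)"
    using f(1) g(1) by (auto intro: path_continuous_image continuous_on_subset)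
  define lo :: pt where "lo = (\<chi> i. if i = 1 then -a else -b)"
  define hi :: pt where "hi = (\<chi> i. if i = 1 then a else b)"
  have "T ` Box \<subseteq> cbox lo hi"
    unfolding Box_def lo_def hi_def by (auto simp: mem_box_cart forall_2 abs_le_iff)
  then have "path_image (T \<circ> f) \<subseteq> cbox lo hi" "path_image (T \<circ> g) \<subseteq> cbox lo hi"
    using f(4) g(4) by (auto simp: path_image_compose)
  then obtain w where "w \<in> path_image (T \<circ> f)" "w \<in> path_image (T \<circ> g)"
    by (rule fashoda[OF paths])
      (use f(2,3) g(2,3) in \<open>simp_all add: pathstart_compose pathfinish_compose lo_def hi_def\<close>)
  then obtain p q where pq: "p \<in> path_image f" "q \<in> path_image g" "T p = T q"
    by (auto simp: path_image_compose)
  then have "(p - x) \<bullet> perp \<nu> = (q - x) \<bullet> perp \<nu>" "(p - x) \<bullet> \<nu> = (q - x) \<bullet> \<nu>"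
    by (metis T_nth)+
  then have "p - x = q - x" using unit_decomp[OF \<nu>, of "p - x"] unit_decomp[OF \<nu>, of "q - x"] by simp
  then show ?thesis using pq by auto
qed

lemma extend_path_along:
  fixes u v x :: pt
  assumes u: "norm u = 1" "u \<bullet> v = 0" and p: "path p"
    and ends: "-c \<le> (pathstart p - x) \<bullet> u" "(pathstart p - x) \<bullet> u \<le> -a"
      "a \<le> (pathfinish p - x) \<bullet> u" "(pathfinish p - x) \<bullet> u \<le> c"
  obtains q where "path q" "(pathstart q - x) \<bullet> u = -c" "(pathfinish q - x) \<bullet> u = c"
    "path_image q \<subseteq> path_image p
       \<union> {z. (z - x) \<bullet> u \<in> {-c..-a} \<and> (z - x) \<bullet> v = (pathstart p - x) \<bullet> v}
       \<union> {z. (z - x) \<bullet> u \<in> {a..c} \<and> (z - x) \<bullet> v = (pathfinish p - x) \<bullet> v}"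
proof -
  let ?s = "pathstart p" and ?t = "pathfinish p"
  define S where "S = ?s - (c + (?s - x) \<bullet> u) *\<^sub>R u"
  define T where "T = ?t + (c - (?t - x) \<bullet> u) *\<^sub>R u"
  have uu: "u \<bullet> u = 1" using u(1) by (simp add: norm_eq_1)
  have S: "(S - x) \<bullet> u = -c" "(S - x) \<bullet> v = (?s - x) \<bullet> v"
    and T: "(T - x) \<bullet> u = c" "(T - x) \<bullet> v = (?t - x) \<bullet> v"
    using uu u(2) by (simp_all add: S_def T_def inner_diff_left inner_add_left algebra_simps)
  have cvx: "convex ({z. (z - x) \<bullet> u \<in> I} \<inter> {z. (z - x) \<bullet> v \<in> {k}})" if "convex I" for I k
    using convex_Int[OF convex_coord_preimage[OF that] convex_coord_preimage[OF convex_singleton]] .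
  have "closed_segment S ?s \<subseteq> {z. (z - x) \<bullet> u \<in> {-c..-a}} \<inter> {z. (z - x) \<bullet> v \<in> {(?s - x) \<bullet> v}}"
    by (rule closed_segment_subset[OF _ _ cvx]) (use S ends in auto)
  moreover have "closed_segment ?t T \<subseteq> {z. (z - x) \<bullet> u \<in> {a..c}} \<inter> {z. (z - x) \<bullet> v \<in> {(?t - x) \<bullet> v}}"
    by (rule closed_segment_subset[OF _ _ cvx]) (use T ends in auto)
  moreover have "path_image (linepath S ?s +++ p +++ linepath ?t T)
      = closed_segment S ?s \<union> path_image p \<union> closed_segment ?t T"
    using p by (simp add: path_image_join Un_assoc)
  ultimately have "path_image (linepath S ?s +++ p +++ linepath ?t T) \<subseteq> path_image p
       \<union> {z. (z - x) \<bullet> u \<in> {-c..-a} \<and> (z - x) \<bullet> v = (?s - x) \<bullet> v}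
       \<union> {z. (z - x) \<bullet> u \<in> {a..c} \<and> (z - x) \<bullet> v = (?t - x) \<bullet> v}"
    by blast
  then show ?thesis
    using that[of "linepath S ?s +++ p +++ linepath ?t T"] p S(1) T(1) by auto
qed

lemma crossing_path_through_chain:
  fixes x \<nu> :: pt
  assumes \<nu>: "norm \<nu> = 1" and r: "0 < r" and l: "l \<noteq> []"
    "set l \<subseteq> {z. (z - x) \<bullet> perp \<nu> \<in> {-4*r..4*r} \<and> (z - x) \<bullet> \<nu> \<in> {-h..h}}"
    "(hd l - x) \<bullet> perp \<nu> \<le> -r" "r \<le> (last l - x) \<bullet> perp \<nu>"
  obtains f where "path f" "(pathstart f - x) \<bullet> perp \<nu> = -(4*r)" "(pathfinish f - x) \<bullet> perp \<nu> = 4*r"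
    "path_image f \<subseteq> {z. (z - x) \<bullet> perp \<nu> \<in> {-4*r..4*r} \<and> (z - x) \<bullet> \<nu> \<in> {-h..h}}"
    "\<And>z. z \<in> path_image f \<Longrightarrow> \<bar>(z - x) \<bullet> perp \<nu>\<bar> < r \<Longrightarrow> z \<in> path_image (polygon_path l)"
proof -
  define e where "e = perp \<nu>"
  have e: "norm e = 1" "e \<bullet> \<nu> = 0" using \<nu> by (simp_all add: e_def)
  have poly: "path (polygon_path l)" "pathstart (polygon_path l) = hd l" "pathfinish (polygon_path l) = last l"
    using path_polygon_path polygon_path_start_finish[OF l(1)] by auto
  have hd_last: "hd l \<in> set l" "last l \<in> set l" using l(1) by auto
  then have ends: "(hd l - x) \<bullet> e \<in> {-4*r..4*r}" "(last l - x) \<bullet> e \<in> {-4*r..4*r}"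
    using l(2) unfolding e_def by blast+
  have poly_strip: "path_image (polygon_path l) \<subseteq> {z. (z - x) \<bullet> e \<in> {-4*r..4*r} \<and> (z - x) \<bullet> \<nu> \<in> {-h..h}}"
  proof (rule polygon_path_image_subset_convex[OF l(1)])
    show "convex {z. (z - x) \<bullet> e \<in> {-4*r..4*r} \<and> (z - x) \<bullet> \<nu> \<in> {-h..h}}"
      unfolding Collect_conj_eq by (intro convex_Int convex_coord_preimage convex_real_interval)
  qed (use l(2) e_def in blast)
  obtain f where f: "path f" "(pathstart f - x) \<bullet> e = -(4*r)" "(pathfinish f - x) \<bullet> e = 4*r"
    "path_image f \<subseteq> path_image (polygon_path l)
       \<union> {z. (z - x) \<bullet> e \<in> {-(4*r)..-r} \<and> (z - x) \<bullet> \<nu> = (hd l - x) \<bullet> \<nu>}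
       \<union> {z. (z - x) \<bullet> e \<in> {r..4*r} \<and> (z - x) \<bullet> \<nu> = (last l - x) \<bullet> \<nu>}"
    by (rule extend_path_along[OF e poly(1), where a=r and c="4*r"])
      (use poly(2,3) l(3,4) ends in \<open>simp_all add: e_def\<close>)
  show ?thesis
  proof (rule that[OF f(1) f(2,3)[unfolded e_def]])
    show "path_image f \<subseteq> {z. (z - x) \<bullet> perp \<nu> \<in> {-4*r..4*r} \<and> (z - x) \<bullet> \<nu> \<in> {-h..h}}"
    proof
      fix z assume "z \<in> path_image f"
      then consider "z \<in> path_image (polygon_path l)"
        | "(z - x) \<bullet> e \<in> {-(4*r)..-r}" "(z - x) \<bullet> \<nu> = (hd l - x) \<bullet> \<nu>"
        | "(z - x) \<bullet> e \<in> {r..4*r}" "(z - x) \<bullet> \<nu> = (last l - x) \<bullet> \<nu>"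
        using f(4) by blast
      then show "z \<in> {z. (z - x) \<bullet> perp \<nu> \<in> {-4*r..4*r} \<and> (z - x) \<bullet> \<nu> \<in> {-h..h}}"
        by cases (use poly_strip l(2) hd_last r e_def in auto)
    qed
    show "z \<in> path_image (polygon_path l)" if "z \<in> path_image f" "\<bar>(z - x) \<bullet> perp \<nu>\<bar> < r" for z
      using that f(4) by (auto simp: e_def abs_less_iff)
  qed
qed

lemma crossing_path_through_ball_path:
  fixes x \<nu> :: pt
  assumes \<nu>: "norm \<nu> = 1"
    and g: "path g" "path_image g \<subseteq> ball x r"
      "(pathstart g - x) \<bullet> \<nu> \<le> -r/4" "r/4 \<le> (pathfinish g - x) \<bullet> \<nu>"
  obtains g' where "path g'" "(pathstart g' - x) \<bullet> \<nu> = -r" "(pathfinish g' - x) \<bullet> \<nu> = r"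
    "path_image g' \<subseteq> {z. \<bar>(z - x) \<bullet> perp \<nu>\<bar> < r \<and> \<bar>(z - x) \<bullet> \<nu>\<bar> \<le> r}"
    "\<And>z. z \<in> path_image g' \<Longrightarrow> \<bar>(z - x) \<bullet> \<nu>\<bar> < r/4 \<Longrightarrow> z \<in> path_image g"
proof -
  define e where "e = perp \<nu>"
  have e: "norm e = 1" "\<nu> \<bullet> e = 0" using \<nu> by (simp_all add: e_def)
  have in_ball: "\<bar>(z - x) \<bullet> e\<bar> < r" "\<bar>(z - x) \<bullet> \<nu>\<bar> < r" if "z \<in> ball x r" for z
    using that abs_inner_le_dist[OF e(1), of z x] abs_inner_le_dist[OF \<nu>, of z x]
    by (simp_all add: dist_commute)
  have ends: "pathstart g \<in> ball x r" "pathfinish g \<in> ball x r"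
    using g(2) pathstart_in_path_image pathfinish_in_path_image by blast+
  obtain g' where g': "path g'" "(pathstart g' - x) \<bullet> \<nu> = -r" "(pathfinish g' - x) \<bullet> \<nu> = r"
    "path_image g' \<subseteq> path_image g
       \<union> {z. (z - x) \<bullet> \<nu> \<in> {-r..-(r/4)} \<and> (z - x) \<bullet> e = (pathstart g - x) \<bullet> e}
       \<union> {z. (z - x) \<bullet> \<nu> \<in> {r/4..r} \<and> (z - x) \<bullet> e = (pathfinish g - x) \<bullet> e}"
    by (rule extend_path_along[OF \<nu> e(2) g(1), where a="r/4" and c=r])
      (use g(3,4) in_ball(2)[OF ends(1)] in_ball(2)[OF ends(2)] in \<open>auto simp: abs_less_iff\<close>)
  show ?thesis
  proof (rule that[OF g'(1-3)])
    show "path_image g' \<subseteq> {z. \<bar>(z - x) \<bullet> perp \<nu>\<bar> < r \<and> \<bar>(z - x) \<bullet> \<nu>\<bar> \<le> r}"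
    proof
      fix z assume "z \<in> path_image g'"
      then consider "z \<in> path_image g"
        | "(z - x) \<bullet> \<nu> \<in> {-r..-(r/4)}" "(z - x) \<bullet> e = (pathstart g - x) \<bullet> e"
        | "(z - x) \<bullet> \<nu> \<in> {r/4..r}" "(z - x) \<bullet> e = (pathfinish g - x) \<bullet> e"
        using g'(4) by blast
      then show "z \<in> {z. \<bar>(z - x) \<bullet> perp \<nu>\<bar> < r \<and> \<bar>(z - x) \<bullet> \<nu>\<bar> \<le> r}"
      proof cases
        case 1
        then have "z \<in> ball x r" using g(2) by blast
        then show ?thesis using in_ball[of z] by (simp add: e_def)
      next
        case 2
        then show ?thesis using in_ball(1)[OF ends(1)] by (simp add: e_def abs_le_iff)
      next
        case 3
        then show ?thesis using in_ball(1)[OF ends(2)] by (simp add: e_def abs_le_iff)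
      qed
    qed
    show "z \<in> path_image g" if "z \<in> path_image g'" "\<bar>(z - x) \<bullet> \<nu>\<bar> < r/4" for z
      using that g'(4) by (auto simp: abs_less_iff)
  qed
qed

text \<open>Fashoda's theorem makes the path meet the polygon through a chain that is finer than the
  distance from the path to \<open>F\<close>.\<close>
lemma fine_chains_meet_paths:
  fixes x \<nu> :: pt
  assumes \<nu>: "norm \<nu> = 1" and F: "closed F" and r: "0 < r" and h: "0 \<le> h" "h < r/4"
    and chains: "\<And>\<delta>. \<delta> > 0 \<Longrightarrow> \<exists>l. l \<noteq> [] \<and> successively (\<lambda>p q. dist p q \<le> \<delta>) l \<and> set l \<subseteq> F \<and>
       set l \<subseteq> {z. (z - x) \<bullet> perp \<nu> \<in> {-4*r..4*r} \<and> (z - x) \<bullet> \<nu> \<in> {-h..h}} \<and>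
       (hd l - x) \<bullet> perp \<nu> \<le> -r \<and> r \<le> (last l - x) \<bullet> perp \<nu>"
    and g: "path g" "path_image g \<subseteq> ball x r"
      "(pathstart g - x) \<bullet> \<nu> \<le> -r/4" "r/4 \<le> (pathfinish g - x) \<bullet> \<nu>"
  shows "path_image g \<inter> F \<noteq> {}"
proof
  assume "path_image g \<inter> F = {}"
  then obtain \<delta> where \<delta>: "\<delta> > 0" "\<And>p q. p \<in> path_image g \<Longrightarrow> q \<in> F \<Longrightarrow> \<delta> \<le> dist p q"
    using separate_compact_closed[OF compact_path_image[OF g(1)] F] by blast
  obtain l where l: "l \<noteq> []" "successively (\<lambda>p q. dist p q \<le> \<delta>/2) l" "set l \<subseteq> F"
      "set l \<subseteq> {z. (z - x) \<bullet> perp \<nu> \<in> {-4*r..4*r} \<and> (z - x) \<bullet> \<nu> \<in> {-h..h}}"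
      "(hd l - x) \<bullet> perp \<nu> \<le> -r" "r \<le> (last l - x) \<bullet> perp \<nu>"
    using chains[of "\<delta>/2"] \<delta>(1) by auto
  obtain f where f: "path f" "(pathstart f - x) \<bullet> perp \<nu> = -(4*r)" "(pathfinish f - x) \<bullet> perp \<nu> = 4*r"
    "path_image f \<subseteq> {z. (z - x) \<bullet> perp \<nu> \<in> {-4*r..4*r} \<and> (z - x) \<bullet> \<nu> \<in> {-h..h}}"
    "\<And>z. z \<in> path_image f \<Longrightarrow> \<bar>(z - x) \<bullet> perp \<nu>\<bar> < r \<Longrightarrow> z \<in> path_image (polygon_path l)"
    using crossing_path_through_chain[OF \<nu> r l(1,4-6)] by blast
  obtain g' where g': "path g'" "(pathstart g' - x) \<bullet> \<nu> = -r" "(pathfinish g' - x) \<bullet> \<nu> = r"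
    "path_image g' \<subseteq> {z. \<bar>(z - x) \<bullet> perp \<nu>\<bar> < r \<and> \<bar>(z - x) \<bullet> \<nu>\<bar> \<le> r}"
    "\<And>z. z \<in> path_image g' \<Longrightarrow> \<bar>(z - x) \<bullet> \<nu>\<bar> < r/4 \<Longrightarrow> z \<in> path_image g"
    using crossing_path_through_ball_path[OF \<nu> g] by blast
  have "path_image f \<inter> path_image g' \<noteq> {}"
  proof (rule paths_cross_in_rotated_box[OF \<nu> f(1) _ _ _ g'(1)])
    show "path_image f \<subseteq> {z. \<bar>(z - x) \<bullet> perp \<nu>\<bar> \<le> 4*r \<and> \<bar>(z - x) \<bullet> \<nu>\<bar> \<le> r}"
      using f(4) h by (auto simp: abs_le_iff)
    show "path_image g' \<subseteq> {z. \<bar>(z - x) \<bullet> perp \<nu>\<bar> \<le> 4*r \<and> \<bar>(z - x) \<bullet> \<nu>\<bar> \<le> r}"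
    proof
      fix z assume "z \<in> path_image g'"
      then have "\<bar>(z - x) \<bullet> perp \<nu>\<bar> < r" "\<bar>(z - x) \<bullet> \<nu>\<bar> \<le> r" using g'(4) by auto
      then show "z \<in> {z. \<bar>(z - x) \<bullet> perp \<nu>\<bar> \<le> 4*r \<and> \<bar>(z - x) \<bullet> \<nu>\<bar> \<le> r}" using r by simp
    qed
  qed (use f(2,3) g'(2,3) in auto)
  then obtain w where w: "w \<in> path_image f" "w \<in> path_image g'" by blast
  have w_poly: "w \<in> path_image (polygon_path l)" using w f(5) g'(4) by blast
  have "\<bar>(w - x) \<bullet> \<nu>\<bar> < r/4" using w(1) f(4) h by (auto simp: abs_less_iff)
  then have w_g: "w \<in> path_image g" using w(2) g'(5) by blast
  obtain v where v: "v \<in> set l" "dist w v \<le> \<delta>/2"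
    using polygon_path_image_near_vertex[OF l(1) _ l(2) w_poly] \<delta>(1) by auto
  then have "\<delta> \<le> dist w v" using \<delta>(2)[OF w_g] l(3) by blast
  then show False using v(2) \<delta>(1) by simp
qed

lemma abs_inner_ge_half_if_perp_small:
  fixes \<nu>1 \<nu>2 :: pt
  assumes "norm \<nu>1 = 1" "norm \<nu>2 = 1" "\<bar>perp \<nu>1 \<bullet> \<nu>2\<bar> \<le> 1/2"
  shows "1/2 \<le> \<bar>\<nu>1 \<bullet> \<nu>2\<bar>"
proof -
  have "(\<nu>2 \<bullet> perp \<nu>1)\<^sup>2 + (\<nu>2 \<bullet> \<nu>1)\<^sup>2 = 1"
    using norm_perp_comb_sq[OF assms(1), of "\<nu>2 \<bullet> perp \<nu>1" "\<nu>2 \<bullet> \<nu>1"] unit_decomp[OF assms(1), of \<nu>2] assms(2)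
    by simp
  moreover have "\<bar>\<nu>2 \<bullet> perp \<nu>1\<bar>\<^sup>2 \<le> (1/2)\<^sup>2"
    using assms(3) by (intro power_mono) (simp_all add: inner_commute)
  ultimately have "(1/2)\<^sup>2 \<le> (\<nu>1 \<bullet> \<nu>2)\<^sup>2" by (simp add: inner_commute power2_eq_square)
  then show ?thesis using abs_le_square_iff[of "1/2" "\<nu>1 \<bullet> \<nu>2"] by simp
qed

lemma normals_aligned:
  fixes \<nu>1 \<nu>2 :: pt
  assumes \<nu>: "norm \<nu>1 = 1" "norm \<nu>2 = 1" and r: "0 < r"
    and z: "dist z (x + (r/4) *\<^sub>R perp \<nu>1) \<le> a" "\<bar>(z - x) \<bullet> \<nu>2\<bar> \<le> b" and ab: "a + b \<le> r/8"
  shows "1/2 \<le> \<bar>\<nu>1 \<bullet> \<nu>2\<bar>"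
proof (rule abs_inner_ge_half_if_perp_small[OF \<nu>])
  have "(z - x) \<bullet> \<nu>2 = (r/4) * (perp \<nu>1 \<bullet> \<nu>2) + (z - (x + (r/4) *\<^sub>R perp \<nu>1)) \<bullet> \<nu>2"
    by (simp add: inner_diff_left inner_add_left)
  moreover have "\<bar>(z - (x + (r/4) *\<^sub>R perp \<nu>1)) \<bullet> \<nu>2\<bar> \<le> a"
    using abs_inner_le_dist[OF \<nu>(2)] z(1) order_trans by blast
  ultimately have "\<bar>(r/4) * (perp \<nu>1 \<bullet> \<nu>2)\<bar> \<le> a + b"
    using z(2) abs_triangle_ineq4[of "(z - x) \<bullet> \<nu>2" "(z - (x + (r/4) *\<^sub>R perp \<nu>1)) \<bullet> \<nu>2"] by simp
  moreover have "\<bar>(r/4) * (perp \<nu>1 \<bullet> \<nu>2)\<bar> = (r/4) * \<bar>perp \<nu>1 \<bullet> \<nu>2\<bar>"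
    using r by (simp add: abs_mult)
  ultimately have "(r/4) * \<bar>perp \<nu>1 \<bullet> \<nu>2\<bar> \<le> (r/4) * (1/2)" using ab by linarith
  then show "\<bar>perp \<nu>1 \<bullet> \<nu>2\<bar> \<le> 1/2" using r by (simp add: mult_le_cancel_left_pos)
qed

lemma coords_near_line_point:
  fixes x \<nu> z :: pt
  assumes "norm \<nu> = 1" "dist z (x + t *\<^sub>R perp \<nu>) \<le> \<rho>"
  shows "\<bar>(z - x) \<bullet> perp \<nu> - t\<bar> \<le> \<rho>" "dist x z \<le> \<bar>t\<bar> + \<rho>"
proof -
  have "(z - x) \<bullet> perp \<nu> - t = (z - (x + t *\<^sub>R perp \<nu>)) \<bullet> perp \<nu>"
    using assms(1) by (simp add: inner_diff_left inner_add_left norm_eq_1)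
  then show "\<bar>(z - x) \<bullet> perp \<nu> - t\<bar> \<le> \<rho>"
    using abs_inner_le_dist[of "perp \<nu>"] assms by (metis norm_perp order_trans)
  show "dist x z \<le> \<bar>t\<bar> + \<rho>"
    using dist_triangle[of x z "x + t *\<^sub>R perp \<nu>"] assms by (simp add: dist_commute dist_norm)
qed

lemma fine_chain_if_small_beta_eta:
  fixes x :: pt
  assumes hyp: "\<And>y s. y \<in> K \<inter> cball x (3*r) \<Longrightarrow> 0 < s \<Longrightarrow> s \<le> 9*r \<Longrightarrow>
                  ennreal (beta K y s) + eta K y s \<le> ennreal \<epsilon>"
    and eps: "0 < \<epsilon>" "\<epsilon> \<le> 1/1000" and r: "0 < r"
    and PQ: "P \<in> K \<inter> cball x (2*r + 40*\<epsilon>*r)" "Q \<in> K \<inter> cball x (2*r + 40*\<epsilon>*r)" and \<delta>: "0 < \<delta>"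
  obtains l where "l \<noteq> []" "hd l = P" "last l = Q" "set l \<subseteq> K \<inter> cball x (3*r)"
    "successively (\<lambda>p q. dist p q \<le> \<delta>) l"
proof -
  have er: "\<epsilon> * r \<le> r / 1000" using eps r by (simp add: mult_right_mono)
  have e40: "40*\<epsilon>*r \<le> r/25" using er by simp
  define L where "L = dist P Q"
  have "L \<le> 4*r + 2*(40*\<epsilon>*r)" using dist_triangle[of P Q x] PQ by (simp add: L_def dist_commute)
  then have L: "2 * L \<le> 9*r" "L \<le> 5*r" using e40 r by linarith+
  have mid: "\<exists>z\<in>K. dist z (midpoint p q) \<le> (11*\<epsilon>) * dist p q"
    if "p \<in> K \<inter> cball x (3*r)" "q \<in> K \<inter> cball x (3*r)" "dist p q \<le> L" for p q
  proof (cases "p = q")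
    case False
    have "2 * dist p q \<le> 9*r" using that(3) L by linarith
    then have "ennreal (beta K p (2 * dist p q)) + eta K p (2 * dist p q) \<le> ennreal \<epsilon>"
      using hyp[OF that(1)] False by simp
    then show ?thesis
      using exists_near_midpoint[OF _ _ _ False] that eps by auto
  qed (use that in auto)
  have "3 * (11*\<epsilon>) * L \<le> 3 * (11*\<epsilon>) * (5*r)" using L(2) eps by (intro mult_left_mono) auto
  then have "3 * (11*\<epsilon>) * L \<le> 165 * (\<epsilon> * r)" by simp
  moreover have "40*\<epsilon>*r = 40 * (\<epsilon> * r)" by simp
  ultimately have R: "(2*r + 40*\<epsilon>*r) + 3 * (11*\<epsilon>) * L \<le> 3*r" using er r by linarith
  have "0 \<le> 11*\<epsilon>" "11*\<epsilon> \<le> 1/6" using eps by auto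
  moreover have "dist P Q \<le> L" by (simp add: L_def)
  ultimately show ?thesis using fine_chain_exists[OF mid _ _ R PQ _ \<delta>] that by blast
qed

lemma fine_chains_along_line:
  fixes x \<nu> :: pt
  assumes hyp: "\<And>y s. y \<in> K \<inter> cball x (3*r) \<Longrightarrow> 0 < s \<Longrightarrow> s \<le> 9*r \<Longrightarrow>
                  ennreal (beta K y s) + eta K y s \<le> ennreal \<epsilon>"
    and eps: "0 < \<epsilon>" "\<epsilon> \<le> 1/1000" and r: "0 < r" and \<nu>: "norm \<nu> = 1"
    and strip: "\<And>z. z \<in> K \<inter> cball x (3*r) \<Longrightarrow> \<bar>(z - x) \<bullet> \<nu>\<bar> \<le> 8*\<epsilon>*r"
    and dense: "\<And>t. \<bar>t\<bar> \<le> 2*r \<Longrightarrow> \<exists>z\<in>K. dist z (x + t *\<^sub>R perp \<nu>) \<le> 40*\<epsilon>*r"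
    and \<delta>: "0 < \<delta>"
  shows "\<exists>l. l \<noteq> [] \<and> successively (\<lambda>p q. dist p q \<le> \<delta>) l \<and> set l \<subseteq> K \<inter> cball x (3*r) \<and>
       set l \<subseteq> {z. (z - x) \<bullet> perp \<nu> \<in> {-4*r..4*r} \<and> (z - x) \<bullet> \<nu> \<in> {-(8*\<epsilon>*r)..8*\<epsilon>*r}} \<and>
       (hd l - x) \<bullet> perp \<nu> \<le> -r \<and> r \<le> (last l - x) \<bullet> perp \<nu>"
proof -
  have e40: "40*\<epsilon>*r \<le> r/25" using eps r by simp
  obtain P Q where "P \<in> K" "dist P (x + (-2*r) *\<^sub>R perp \<nu>) \<le> 40*\<epsilon>*r"
    and "Q \<in> K" "dist Q (x + (2*r) *\<^sub>R perp \<nu>) \<le> 40*\<epsilon>*r"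
    using dense[of "-2*r"] dense[of "2*r"] r by auto
  with coords_near_line_point[OF \<nu>] r
  have P: "P \<in> K \<inter> cball x (2*r + 40*\<epsilon>*r)" "\<bar>(P - x) \<bullet> perp \<nu> + 2*r\<bar> \<le> 40*\<epsilon>*r"
    and Q: "Q \<in> K \<inter> cball x (2*r + 40*\<epsilon>*r)" "\<bar>(Q - x) \<bullet> perp \<nu> - 2*r\<bar> \<le> 40*\<epsilon>*r"
    by fastforce+
  have PQ: "(P - x) \<bullet> perp \<nu> \<le> -r" "r \<le> (Q - x) \<bullet> perp \<nu>"
    using P(2) Q(2) e40 r unfolding abs_le_iff by linarith+
  obtain l where l: "l \<noteq> []" "hd l = P" "last l = Q" "set l \<subseteq> K \<inter> cball x (3*r)"
      "successively (\<lambda>p q. dist p q \<le> \<delta>) l"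
    using fine_chain_if_small_beta_eta[OF hyp eps r P(1) Q(1) \<delta>] by blast
  have "set l \<subseteq> {z. (z - x) \<bullet> perp \<nu> \<in> {-4*r..4*r} \<and> (z - x) \<bullet> \<nu> \<in> {-(8*\<epsilon>*r)..8*\<epsilon>*r}}"
  proof
    fix z assume "z \<in> set l"
    then have z: "z \<in> K \<inter> cball x (3*r)" using l(4) by blast
    then have "\<bar>(z - x) \<bullet> perp \<nu>\<bar> \<le> 3*r"
      using abs_inner_le_dist[of "perp \<nu>" z x] \<nu> by (auto simp: dist_commute)
    then show "z \<in> {z. (z - x) \<bullet> perp \<nu> \<in> {-4*r..4*r} \<and> (z - x) \<bullet> \<nu> \<in> {-(8*\<epsilon>*r)..8*\<epsilon>*r}}"
      using strip[OF z] r by (auto simp: abs_le_iff)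
  qed
  then show ?thesis using l PQ by blast
qed

lemma separates_if_crossing_paths_meet:
  assumes mn: "min_normal K x r \<nu>" and r: "0 < r" and \<beta>: "beta K x r < 1/2"
    and opn: "open (ball x r - K)"
    and cross: "\<And>g. path g \<Longrightarrow> path_image g \<subseteq> ball x r \<Longrightarrow>
        pathstart g = x - (r/2) *\<^sub>R \<nu> \<Longrightarrow> pathfinish g = x + (r/2) *\<^sub>R \<nu> \<Longrightarrow> path_image g \<inter> K \<noteq> {}"
  shows "separates (K \<inter> ball x r) x r"
proof -
  define S where "S = ball x r - K"
  define \<beta>r where "\<beta>r = beta K x r * r"
  have \<nu>: "norm \<nu> = 1" using mn unfolding min_normal_def by simp
  have \<beta>r: "\<beta>r < r/2" using mult_strict_right_mono[OF \<beta> r] by (simp add: \<beta>r_def)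
  have D_S: "Dplus x r \<nu> \<beta>r \<subseteq> S" "Dminus x r \<nu> \<beta>r \<subseteq> S"
    using abs_inner_le_beta[OF mn r] unfolding Dplus_def Dminus_def S_def \<beta>r_def by fastforce+
  have "Dplus x r \<nu> \<beta>r = ball x r \<inter> {z. (z - x) \<bullet> \<nu> \<in> {\<beta>r<..}}"
    "Dminus x r \<nu> \<beta>r = ball x r \<inter> {z. (z - x) \<bullet> \<nu> \<in> {..<-\<beta>r}}"
    unfolding Dplus_def Dminus_def by auto
  then have D_conn: "connected (Dplus x r \<nu> \<beta>r)" "connected (Dminus x r \<nu> \<beta>r)"
    by (simp_all only:) (intro convex_connected convex_Int convex_ball convex_coord_preimage convex_real_interval)+
  define ap where "ap = x + (r/2) *\<^sub>R \<nu>"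
  define am where "am = x - (r/2) *\<^sub>R \<nu>"
  have "ap \<in> Dplus x r \<nu> \<beta>r" "am \<in> Dminus x r \<nu> \<beta>r"
    using \<nu> \<nu>[unfolded norm_eq_1] \<beta>r r
    by (simp_all add: ap_def am_def Dplus_def Dminus_def dist_norm inner_add_left inner_diff_left)
  then have comp: "Dplus x r \<nu> \<beta>r \<subseteq> connected_component_set S ap"
    "Dminus x r \<nu> \<beta>r \<subseteq> connected_component_set S am"
    using connected_component_maximal D_S D_conn by blast+
  have "am \<notin> connected_component_set S ap"
  proof
    assume "am \<in> connected_component_set S ap"
    then have "path_component S ap am"
      using open_path_connected_component[of S ap] opn by (simp add: S_def)
    then have "path_component S am ap" by (rule path_component_sym)
    then obtain g where "path g" "path_image g \<subseteq> S" "pathstart g = am" "pathfinish g = ap"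
      unfolding path_component_def by blast
    then show False using cross[of g] by (auto simp: S_def am_def ap_def)
  qed
  moreover have "am \<in> connected_component_set S am" "ap \<in> S" "am \<in> S"
    using \<open>ap \<in> _\<close> \<open>am \<in> _\<close> D_S by auto
  ultimately have "\<exists>C1 C2. C1 \<in> components S \<and> C2 \<in> components S \<and> C1 \<noteq> C2 \<and>
      Dplus x r \<nu> \<beta>r \<subseteq> C1 \<and> Dminus x r \<nu> \<beta>r \<subseteq> C2"
    using comp by (metis componentsI)
  moreover have "ball x r - K \<inter> ball x r = S" by (auto simp: S_def)
  ultimately have "\<exists>C1 C2. C1 \<in> components (ball x r - K \<inter> ball x r) \<and>
      C2 \<in> components (ball x r - K \<inter> ball x r) \<and> C1 \<noteq> C2 \<and>
      Dplus x r \<nu> (beta K x r * r) \<subseteq> C1 \<and> Dminus x r \<nu> (beta K x r * r) \<subseteq> C2"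
    by (simp add: \<beta>r_def)
  then show ?thesis
    unfolding separates_def beta_Int_ball min_normal_Int_ball using less_imp_le[OF \<beta>] mn by blast
qed

lemma transversal_path_meets_fine_chains:
  fixes x \<nu>1 \<nu>2 :: pt
  assumes \<nu>: "norm \<nu>1 = 1" "norm \<nu>2 = 1" and aligned: "1/2 \<le> \<bar>\<nu>1 \<bullet> \<nu>2\<bar>"
    and F: "closed F" and r: "0 < r" and h: "0 \<le> h" "h < r/4"
    and chains: "\<And>\<delta>. \<delta> > 0 \<Longrightarrow> \<exists>l. l \<noteq> [] \<and> successively (\<lambda>p q. dist p q \<le> \<delta>) l \<and> set l \<subseteq> F \<and>
       set l \<subseteq> {z. (z - x) \<bullet> perp \<nu>2 \<in> {-4*r..4*r} \<and> (z - x) \<bullet> \<nu>2 \<in> {-h..h}} \<and>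
       (hd l - x) \<bullet> perp \<nu>2 \<le> -r \<and> r \<le> (last l - x) \<bullet> perp \<nu>2"
    and g: "path g" "path_image g \<subseteq> ball x r"
      "pathstart g = x - (r/2) *\<^sub>R \<nu>1" "pathfinish g = x + (r/2) *\<^sub>R \<nu>1"
  shows "path_image g \<inter> F \<noteq> {}"
proof -
  define c where "c = \<nu>1 \<bullet> \<nu>2"
  have ends: "(pathstart g - x) \<bullet> \<nu>2 = - (r/2 * c)" "(pathfinish g - x) \<bullet> \<nu>2 = r/2 * c"
    using g(3,4) by (simp_all add: c_def)
  have rc: "r/2 * (1/2) \<le> r/2 * \<bar>c\<bar>" using aligned r unfolding c_def by (intro mult_left_mono) auto
  obtain g0 where g0: "path g0" "path_image g0 = path_image g"
    "(pathstart g0 - x) \<bullet> \<nu>2 \<le> -r/4" "r/4 \<le> (pathfinish g0 - x) \<bullet> \<nu>2"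
  proof (cases "0 \<le> c")
    case True
    then show ?thesis using that[OF g(1)] ends rc by simp
  next
    case False
    then show ?thesis using that[of "reversepath g"] g(1) ends rc by (simp add: algebra_simps)
  qed
  have "path_image g0 \<inter> F \<noteq> {}"
    by (rule fine_chains_meet_paths[OF \<nu>(2) F r h chains g0(1) _ g0(3,4)]) (use g0(2) g(2) in auto)
  then show ?thesis using g0(2) by simp
qed

text \<open>The chains are built along the line of scale \<open>8r\<close>, long enough to cross \<open>B(x,r)\<close>; the line
  of scale \<open>r\<close>, which defines \<open>D\<^sup>\<plusminus>\<close>, is nearly parallel to it.\<close>
lemma separates_if_small_beta_eta:
  assumes hyp: "\<And>y s. y \<in> K \<inter> cball x (3*r) \<Longrightarrow> 0 < s \<Longrightarrow> s \<le> 9*r \<Longrightarrow>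
                  ennreal (beta K y s) + eta K y s \<le> ennreal \<epsilon>"
    and eps: "0 < \<epsilon>" "\<epsilon> \<le> 1/1000" and x: "x \<in> K" and r: "0 < r"
    and closed: "closed (K \<inter> cball x (3*r))"
  shows "separates (K \<inter> ball x r) x r"
proof -
  have hyp_r: "ennreal (beta K x r) + eta K x r \<le> ennreal \<epsilon>"
    and hyp_8r: "ennreal (beta K x (8*r)) + eta K x (8*r) \<le> ennreal \<epsilon>"
    using hyp[of x] x r by auto
  have small: "5*\<epsilon>*r \<le> r/200" "8*\<epsilon>*r \<le> r/125" using eps r by simp_all
  obtain \<nu>1 where mn1: "min_normal K x r \<nu>1"
    and dense1: "\<And>t. \<bar>t\<bar> \<le> r/4 \<Longrightarrow> \<exists>z\<in>K. dist z (x + t *\<^sub>R perp \<nu>1) \<le> 5 * \<epsilon> * r"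
    using flat_dense_if_small_beta_eta[OF hyp_r] r eps by auto
  obtain \<nu>2 where mn2: "min_normal K x (8*r) \<nu>2"
    and dense2: "\<And>t. \<bar>t\<bar> \<le> 8*r/4 \<Longrightarrow> \<exists>z\<in>K. dist z (x + t *\<^sub>R perp \<nu>2) \<le> 5 * \<epsilon> * (8*r)"
    using flat_dense_if_small_beta_eta[OF hyp_8r] r eps by auto
  have \<nu>: "norm \<nu>1 = 1" "norm \<nu>2 = 1" using mn1 mn2 unfolding min_normal_def by auto
  have strip: "\<bar>(z - x) \<bullet> \<nu>2\<bar> \<le> 8*\<epsilon>*r" if "z \<in> K \<inter> cball x (3*r)" for z
    using abs_inner_le_if_beta_le[OF mn2 _ beta_le_if_beta_eta_le[OF hyp_8r], of z] that eps r
    by (simp add: dist_commute)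
  obtain z1 where z1: "z1 \<in> K" "dist z1 (x + (r/4) *\<^sub>R perp \<nu>1) \<le> 5 * \<epsilon> * r"
    using dense1[of "r/4"] r by auto
  then have "dist x z1 \<le> r/4 + 5 * \<epsilon> * r"
    using dist_triangle[of x z1 "x + (r/4) *\<^sub>R perp \<nu>1"] \<nu>(1) r by (simp add: dist_commute dist_norm)
  then have "dist x z1 \<le> 3*r" using small(1) r by linarith
  then have "z1 \<in> K \<inter> cball x (3*r)" using z1(1) by simp
  then have aligned: "1/2 \<le> \<bar>\<nu>1 \<bullet> \<nu>2\<bar>"
    using normals_aligned[OF \<nu> r z1(2) strip] small r by simp
  have \<beta>1: "beta K x r < 1/2" using beta_le_if_beta_eta_le[OF hyp_r] eps by simp
  have "ball x r - K = ball x r - (K \<inter> cball x (3*r))" using r by auto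
  then have "open (ball x r - K)" using open_Diff[OF open_ball closed] by simp
  then show ?thesis
  proof (rule separates_if_crossing_paths_meet[OF mn1 r \<beta>1])
    fix g assume g: "path g" "path_image g \<subseteq> ball x r"
      "pathstart g = x - (r/2) *\<^sub>R \<nu>1" "pathfinish g = x + (r/2) *\<^sub>R \<nu>1"
    have "path_image g \<inter> (K \<inter> cball x (3*r)) \<noteq> {}"
    proof (rule transversal_path_meets_fine_chains[OF \<nu> aligned closed r _ _ _ g])
      show "0 \<le> 8*\<epsilon>*r" "8*\<epsilon>*r < r/4" using eps r small(2) by auto
      show "\<exists>l. l \<noteq> [] \<and> successively (\<lambda>p q. dist p q \<le> \<delta>) l \<and> set l \<subseteq> K \<inter> cball x (3*r) \<and>
          set l \<subseteq> {z. (z - x) \<bullet> perp \<nu>2 \<in> {-4*r..4*r} \<and> (z - x) \<bullet> \<nu>2 \<in> {-(8*\<epsilon>*r)..8*\<epsilon>*r}} \<and>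
          (hd l - x) \<bullet> perp \<nu>2 \<le> -r \<and> r \<le> (last l - x) \<bullet> perp \<nu>2" if "0 < \<delta>" for \<delta>
        by (rule fine_chains_along_line[OF hyp eps r \<nu>(2) strip _ that])
          (use dense2 in \<open>auto simp: mult.assoc\<close>)
    qed
    then show "path_image g \<inter> K \<noteq> {}" by blast
  qed
qed

section \<open>Vanishing of holes and bad mass\<close>

lemma coral_Int_ball:
  assumes "coral K"
  shows "coral (K \<inter> ball x r)"
  unfolding coral_def
proof (intro ballI allI impI)
  fix z \<rho> assume z: "z \<in> K \<inter> ball x r" and \<rho>: "(0::real) < \<rho>"
  define \<rho>' where "\<rho>' = min \<rho> (r - dist x z)"
  have "0 < \<rho>'" using z \<rho> unfolding \<rho>'_def by auto
  then have "0 < H1 (K \<inter> ball z \<rho>')" using assms z unfolding coral_def by blast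
  also have "\<dots> \<le> H1 (K \<inter> ball x r \<inter> ball z \<rho>)"
  proof (rule H1_mono, safe)
    fix w assume "w \<in> K" "w \<in> ball z \<rho>'"
    then show "w \<in> ball x r" "w \<in> ball z \<rho>"
      using dist_triangle[of x w z] unfolding \<rho>'_def by auto
  qed
  finally show "0 < H1 (K \<inter> ball x r \<inter> ball z \<rho>)" .
qed

lemma sep_ext_Int_ball:
  assumes "coral K" "closedin (top_of_set (ball x r)) (K \<inter> ball x r)" "separates (K \<inter> ball x r) x r"
  shows "sep_ext K x r (K \<inter> ball x r)"
  using assms coral_Int_ball unfolding sep_ext_def by auto

lemma tau_bounds: "0 < tau" "tau \<le> 1"
proof -
  have "10 powr (-10::real) \<le> 10 powr 0" by (rule powr_mono) auto
  then show "0 < tau" "tau \<le> 1" unfolding tau_def by simp_all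
qed

lemma mK_eq_0_if_flat:
  assumes "H1 (E - K) = 0"
    and flat: "\<And>y t. y \<in> K \<inter> ball x (9/10 * r) \<Longrightarrow> 0 < t \<Longrightarrow> t \<le> r/10 \<Longrightarrow> beta K y t \<le> tau"
  shows "mK K E x r = 0"
proof -
  have "sigma K E r y = 0" if y: "y \<in> K \<inter> ball x (9/10 * r)" for y
  proof -
    have "good_ball K E y t" if "0 < t" "t \<le> r/10" for t
    proof -
      have "H1 (E \<inter> ball y t - K) \<le> H1 (E - K)" by (rule H1_mono) auto
      then show ?thesis using assms(1) flat[OF y that] unfolding good_ball_def by simp
    qed
    then have "{r'. r' > 0 \<and> (\<forall>t\<in>{r'..r/10}. good_ball K E y t)} = {0<..}" by auto
    then show ?thesis unfolding sigma_def by simp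
  qed
  then have "badR K E x r = {}" unfolding badR_def by auto
  then show ?thesis unfolding mK_def by simp
qed

lemma no_holes_if_sep_ext_Int_ball:
  assumes "sep_ext K x r (K \<inter> ball x r)"
    and flat: "\<And>y t. y \<in> K \<inter> ball x (9/10 * r) \<Longrightarrow> 0 < t \<Longrightarrow> t \<le> r/10 \<Longrightarrow> beta K y t \<le> tau"
  shows "eta K x r = 0 \<and> (\<forall>E. min_sep_ext K x r E \<longrightarrow> mK K E x r = 0)"
proof -
  have "(INF E\<in>{E. sep_ext K x r E}. H1 (E - K)) \<le> H1 (K \<inter> ball x r - K)"
    by (rule INF_lower) (use assms(1) in simp)
  moreover have "K \<inter> ball x r - K = {}" by blast
  ultimately have INF0: "(INF E\<in>{E. sep_ext K x r E}. H1 (E - K)) = 0" by simp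
  have "mK K E x r = 0" if "min_sep_ext K x r E" for E
    by (rule mK_eq_0_if_flat[OF _ flat]) (use that INF0 in \<open>simp_all add: min_sep_ext_def\<close>)
  then show ?thesis unfolding eta_def INF0 by simp
qed

lemma closed_Int_if_closedin:
  assumes "closedin (top_of_set \<Omega>) K" "C \<subseteq> \<Omega>" "closed C"
  shows "closed (K \<inter> C)"
proof -
  obtain F where "closed F" "K = \<Omega> \<inter> F" using assms(1) closedin_closed by blast
  then have "K \<inter> C = F \<inter> C" using assms(2) by auto
  then show ?thesis using \<open>closed F\<close> assms(3) by (simp add: closed_Int)
qed

lemma closedin_Int_if_closedin:
  assumes "closedin (top_of_set \<Omega>) K" "U \<subseteq> \<Omega>"
  shows "closedin (top_of_set U) (K \<inter> U)"
proof -
  obtain F where "closed F" "K = \<Omega> \<inter> F" using assms(1) closedin_closed by blast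
  then have "K \<inter> U = U \<inter> F" using assms(2) by auto
  then show ?thesis using closedin_closed_Int[OF \<open>closed F\<close>] by simp
qed

lemma sep_ext_Int_ball_if_small_beta_eta:
  assumes K: "closedin (top_of_set \<Omega>) K" "coral K" and B: "0 < r0" "ball x0 r0 \<subseteq> \<Omega>"
    and hyp: "\<forall>y\<in>K \<inter> ball x0 (r0/2). \<forall>s. 0 < s \<and> s \<le> r0/2 \<longrightarrow>
      ennreal (beta K y s) + eta K y s \<le> ennreal \<epsilon>"
    and eps: "0 < \<epsilon>" "\<epsilon> \<le> 1/1000"
    and x: "x \<in> K \<inter> ball x0 (r0/20)" and r: "0 < r" "r \<le> r0/20"
  shows "sep_ext K x r (K \<inter> ball x r)"
proof -
  have near: "cball x (3*r) \<subseteq> ball x0 (r0/2)"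
  proof
    fix y assume "y \<in> cball x (3*r)"
    then show "y \<in> ball x0 (r0/2)" using x r dist_triangle[of x0 y x] by simp
  qed
  moreover have "ball x0 (r0/2) \<subseteq> ball x0 r0" using B by (intro subset_ball) simp
  ultimately have "cball x (3*r) \<subseteq> \<Omega>" using B by blast
  then have "ball x r \<subseteq> \<Omega>" "closed (K \<inter> cball x (3*r))"
    using r closed_Int_if_closedin[OF K(1)] by auto
  moreover have "separates (K \<inter> ball x r) x r"
    by (rule separates_if_small_beta_eta[OF _ eps _ r(1)]) (use hyp near x r calculation in auto)
  ultimately show ?thesis
    using sep_ext_Int_ball[OF K(2) closedin_Int_if_closedin[OF K(1)]] by blast
qed

lemma no_holes_if_small_beta_eta:
  assumes K: "closedin (top_of_set \<Omega>) K" "coral K" and B: "0 < r0" "ball x0 r0 \<subseteq> \<Omega>"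
    and hyp: "\<forall>y\<in>K \<inter> ball x0 (r0/2). \<forall>s. 0 < s \<and> s \<le> r0/2 \<longrightarrow>
      ennreal (beta K y s) + eta K y s \<le> ennreal \<epsilon>"
    and eps: "0 < \<epsilon>" "\<epsilon> \<le> tau / 1000"
    and x: "x \<in> K \<inter> ball x0 (r0/20)" and r: "0 < r" "r \<le> r0/20"
  shows "eta K x r = 0 \<and> (\<forall>E. min_sep_ext K x r E \<longrightarrow> mK K E x r = 0)"
proof (rule no_holes_if_sep_ext_Int_ball)
  show "sep_ext K x r (K \<inter> ball x r)"
    by (rule sep_ext_Int_ball_if_small_beta_eta[OF K B hyp eps(1) _ x r]) (use eps tau_bounds in simp)
  fix y t assume "y \<in> K \<inter> ball x (9/10 * r)" "0 < t" "t \<le> r/10"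
  then have "ennreal (beta K y t) + eta K y t \<le> ennreal \<epsilon>"
    using hyp dist_triangle[of x0 y x] x r by auto
  then have "beta K y t \<le> \<epsilon>" by (rule beta_le_if_beta_eta_le) (use eps in simp)
  then show "beta K y t \<le> tau" using eps tau_bounds by simp
qed

theorem lemma4p11:
  shows "\<exists>\<epsilon>>0. \<forall>(\<Omega>::pt set) C h u K.
     open \<Omega> \<and> elastic C \<and> gauge_fn h \<and> griffith_amin C \<Omega> h u K \<longrightarrow>
     (\<forall>x0 r0. x0 \<in> K \<and> r0 > 0 \<and> ball x0 r0 \<subseteq> \<Omega> \<and>
        (\<forall>x\<in>K \<inter> ball x0 (r0/2). \<forall>r. 0 < r \<and> r \<le> r0/2 \<longrightarrow>
            ennreal (beta K x r) + eta K x r \<le> ennreal \<epsilon>)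
      \<longrightarrow> (\<forall>x\<in>K \<inter> ball x0 (r0/20). \<forall>r. 0 < r \<and> r \<le> r0/20 \<longrightarrow>
            eta K x r = 0 \<and> (\<forall>E. min_sep_ext K x r E \<longrightarrow> mK K E x r = 0)))"
proof (intro exI[of _ "tau / 1000"] conjI; (intro allI impI ballI)?)
  show "0 < tau / 1000" using tau_bounds by simp
  fix \<Omega> :: "pt set" and C h u K x0 r0 x r
  assume amin: "open \<Omega> \<and> elastic C \<and> gauge_fn h \<and> griffith_amin C \<Omega> h u K"
    and H: "x0 \<in> K \<and> r0 > 0 \<and> ball x0 r0 \<subseteq> \<Omega> \<and>
      (\<forall>x\<in>K \<inter> ball x0 (r0/2). \<forall>r. 0 < r \<and> r \<le> r0/2 \<longrightarrow>
         ennreal (beta K x r) + eta K x r \<le> ennreal (tau / 1000))"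
    and x: "x \<in> K \<inter> ball x0 (r0/20)" and r: "0 < r \<and> r \<le> r0/20"
  have "closedin (top_of_set \<Omega>) K" "coral K"
    using amin unfolding griffith_amin_def admissible_def by auto
  then show "eta K x r = 0 \<and> (\<forall>E. min_sep_ext K x r E \<longrightarrow> mK K E x r = 0)"
    using no_holes_if_small_beta_eta[of \<Omega> K r0 x0 "tau / 1000" x r] H x r tau_bounds by auto
qed

end
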